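(* Let $U$ be an open subset of a complex locally convex space $E$, let $F$ be a sequentially complete complex locally convex space, and let $\Lambda$ be a set of continuous complex linear functionals on $F$ which separates the points of $F$ (for each $x\ne0$ in $F$ there is $\lambda\in\Lambda$ with $\lambda(x)\ne0$). If $f\colon U\to F$ is continuous and $\lambda\circ f\colon U\to\mathbb C$ is complex analytic for every $\lambda\in\Lambda$, then $f$ is complex analytic.
   Context: A map $f\colon U\to F$ between locally convex spaces is complex analytic if it is continuous and locally given by a pointwise convergent series of continuous homogeneous polynomials; equivalently it is $C^\infty_{\mathbb C}$ in the sense of Bastiani/Keller, i.e. all iterated complex directional derivatives $d^{(k)}f(x,y_1,\dots,y_k)$ exist and define continuous maps $U\times E^k\to F$. *)

theory Defs
  imports "HOL-Analysis.Analysis"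
begin

definition cvs :: "(complex \<Rightarrow> 'a::ab_group_add \<Rightarrow> 'a) \<Rightarrow> bool" where
  "cvs sm \<longleftrightarrow>
     (\<forall>a x y. sm a (x + y) = sm a x + sm a y) \<and>
     (\<forall>a b x. sm (a + b) x = sm a x + sm b x) \<and>
     (\<forall>a b x. sm (a * b) x = sm a (sm b x)) \<and>
     (\<forall>x. sm 1 x = x)"

definition cseminorm :: "(complex \<Rightarrow> 'a::ab_group_add \<Rightarrow> 'a) \<Rightarrow> ('a \<Rightarrow> real) \<Rightarrow> bool" where
  "cseminorm sm p \<longleftrightarrow>
     (\<forall>x y. p (x + y) \<le> p x + p y) \<and> (\<forall>c x. p (sm c x) = norm c * p x)"

text \<open>The locally convex topology defined by a family of seminorms (subbasis: open
  semiballs; UNIV is added so that the carrier is UNIV even for the empty family).\<close>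
definition seminorm_topology :: "('a::ab_group_add \<Rightarrow> real) set \<Rightarrow> 'a topology" where
  "seminorm_topology P =
     topology_generated_by (insert UNIV {{y. p (y - x) < r} | p x r. p \<in> P \<and> r > 0})"

definition clcs :: "(complex \<Rightarrow> 'a::ab_group_add \<Rightarrow> 'a) \<Rightarrow> ('a \<Rightarrow> real) set \<Rightarrow> bool" where
  "clcs sm P \<longleftrightarrow> cvs sm \<and> (\<forall>p\<in>P. cseminorm sm p) \<and> (\<forall>x. x \<noteq> 0 \<longrightarrow> (\<exists>p\<in>P. p x \<noteq> 0))"

definition seminorm_Cauchy :: "('a::ab_group_add \<Rightarrow> real) set \<Rightarrow> (nat \<Rightarrow> 'a) \<Rightarrow> bool" where
  "seminorm_Cauchy P X \<longleftrightarrow>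
     (\<forall>p\<in>P. \<forall>e>0. \<exists>N. \<forall>m\<ge>N. \<forall>n\<ge>N. p (X m - X n) < e)"

definition seq_complete_lcs :: "('a::ab_group_add \<Rightarrow> real) set \<Rightarrow> bool" where
  "seq_complete_lcs P \<longleftrightarrow>
     (\<forall>X. seminorm_Cauchy P X \<longrightarrow> (\<exists>l. limitin (seminorm_topology P) X l sequentially))"

definition clinear_map ::
  "(complex \<Rightarrow> 'a::ab_group_add \<Rightarrow> 'a) \<Rightarrow> (complex \<Rightarrow> 'b::ab_group_add \<Rightarrow> 'b) \<Rightarrow> ('a \<Rightarrow> 'b) \<Rightarrow> bool" where
  "clinear_map smE smF T \<longleftrightarrow>
     (\<forall>x y. T (x + y) = T x + T y) \<and> (\<forall>c x. T (smE c x) = smF c (T x))"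

text \<open>Complex n-linear maps \<open>E\<^sup>n \<rightarrow> F\<close>; the arguments are indexed by \<open>{..<n}\<close>.\<close>
definition cmultilinear ::
  "(complex \<Rightarrow> 'a::ab_group_add \<Rightarrow> 'a) \<Rightarrow> (complex \<Rightarrow> 'b::ab_group_add \<Rightarrow> 'b) \<Rightarrow> nat
     \<Rightarrow> ((nat \<Rightarrow> 'a) \<Rightarrow> 'b) \<Rightarrow> bool" where
  "cmultilinear smE smF n A \<longleftrightarrow>
     (\<forall>v w. (\<forall>i<n. v i = w i) \<longrightarrow> A v = A w) \<and>
     (\<forall>i<n. \<forall>v. clinear_map smE smF (\<lambda>y. A (v(i := y))))"

definition chom_poly ::
  "(complex \<Rightarrow> 'a::ab_group_add \<Rightarrow> 'a) \<Rightarrow> (complex \<Rightarrow> 'b::ab_group_add \<Rightarrow> 'b) \<Rightarrow> nat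
     \<Rightarrow> ('a \<Rightarrow> 'b) \<Rightarrow> bool" where
  "chom_poly smE smF n p \<longleftrightarrow> (\<exists>A. cmultilinear smE smF n A \<and> (\<forall>y. p y = A (\<lambda>_. y)))"

definition canalytic ::
  "(complex \<Rightarrow> 'a::ab_group_add \<Rightarrow> 'a) \<Rightarrow> ('a \<Rightarrow> real) set \<Rightarrow>
   (complex \<Rightarrow> 'b::ab_group_add \<Rightarrow> 'b) \<Rightarrow> ('b \<Rightarrow> real) set \<Rightarrow> 'a set \<Rightarrow> ('a \<Rightarrow> 'b) \<Rightarrow> bool" where
  "canalytic smE PE smF PF U f \<longleftrightarrow>
     continuous_map (subtopology (seminorm_topology PE) U) (seminorm_topology PF) f \<and>
     (\<forall>x\<in>U. \<exists>V pn. openin (seminorm_topology PE) V \<and> x \<in> V \<and> V \<subseteq> U \<and>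
        (\<forall>n. chom_poly smE smF n (pn n) \<and>
             continuous_map (seminorm_topology PE) (seminorm_topology PF) (pn n)) \<and>
        (\<forall>y\<in>V. limitin (seminorm_topology PF) (\<lambda>N. \<Sum>n<N. pn n (y - x)) (f y) sequentially))"

abbreviation complex_seminorms :: "(complex \<Rightarrow> real) set" where
  "complex_seminorms \<equiv> {norm}"

end

theory Submission
  imports Defs "HOL-Complex_Analysis.Complex_Analysis" "HOL-Library.Real_Mod"
begin

text \<open>Fix \<open>x \<in> U\<close>. For \<open>h\<close> in a small seminorm ball, every \<open>\<lambda> \<circ> f\<close> is holomorphic along the complex
  line \<open>\<zeta> \<mapsto> x + \<zeta> h\<close> for \<open>|\<zeta>| < 3\<close>, so its weak Taylor coefficients \<open>\<lambda>(p\<^sub>n h)\<close> are Cauchy integrals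
  of \<open>\<zeta>\<^sup>-\<^sup>n \<lambda>(f(x + \<zeta> h))\<close> over the unit circle. The discrete Cauchy averages over the \<open>2\<^sup>k\<close>-th roots
  of unity, formed in \<open>F\<close> itself, form a Cauchy sequence because \<open>(\<zeta>, h) \<mapsto> \<zeta>\<^sup>-\<^sup>n f(x + \<zeta> h)\<close> is
  uniformly continuous on the unit circle times a neighbourhood of \<open>h\<close>; sequential completeness
  provides their limits \<open>p\<^sub>n h\<close>, and \<open>\<Lambda>\<close> identifies \<open>\<lambda>(p\<^sub>n h)\<close> with the weak coefficients. Seminorm
  bounds on \<open>f\<close> pass through the averages to \<open>p\<^sub>n\<close>, which gives continuity of \<open>p\<^sub>n\<close> and geometric
  convergence of \<open>\<Sum> p\<^sub>n (y - x)\<close>, and the polarization formula, applied to the scalar multilinear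
  forms and transported back along \<open>\<Lambda>\<close>, shows that each \<open>p\<^sub>n\<close> is a homogeneous polynomial.\<close>

section \<open>Complex vector spaces with a family of seminorms\<close>

locale cvector_space =
  fixes sm :: "complex \<Rightarrow> 'a::ab_group_add \<Rightarrow> 'a"
  assumes cvs: "cvs sm"
begin

lemma scale_add_right: "sm a (x + y) = sm a x + sm a y"
  using cvs by (simp add: cvs_def)

lemma scale_add_left: "sm (a + b) x = sm a x + sm b x"
  using cvs by (simp add: cvs_def)

lemma scale_mult: "sm (a * b) x = sm a (sm b x)"
  using cvs by (simp add: cvs_def)

lemma scale_one [simp]: "sm 1 x = x"
  using cvs by (simp add: cvs_def)

lemma scale_zero_right [simp]: "sm a 0 = 0"
  using scale_add_right[of a 0 0] by simp

lemma scale_zero_left [simp]: "sm 0 x = 0"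
  using scale_add_left[of 0 0 x] by simp

lemma scale_minus_right: "sm a (- x) = - sm a x"
  using scale_add_right[of a x "- x"] by (simp add: eq_neg_iff_add_eq_0 add.commute)

lemma scale_minus_left: "sm (- a) x = - sm a x"
  using scale_add_left[of a "- a" x] by (simp add: eq_neg_iff_add_eq_0 add.commute)

lemma scale_diff_right: "sm a (x - y) = sm a x - sm a y"
  using scale_add_right[of a x "- y"] scale_minus_right by simp

lemma scale_diff_left: "sm (a - b) x = sm a x - sm b x"
  using scale_add_left[of a "- b" x] scale_minus_left by simp

lemma scale_sum_right: "sm a (\<Sum>i\<in>S. g i) = (\<Sum>i\<in>S. sm a (g i))"
  by (induction S rule: infinite_finite_induct) (auto simp: scale_add_right)

lemma scale_of_nat: "sm (of_nat k) x = (\<Sum>i<k. x)"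
  by (induction k) (auto simp: scale_add_left)

end

locale complex_seminorm = cvector_space sm for sm :: "complex \<Rightarrow> 'a::ab_group_add \<Rightarrow> 'a" +
  fixes p :: "'a \<Rightarrow> real"
  assumes triangle: "p (x + y) \<le> p x + p y"
    and homog: "p (sm c x) = norm c * p x"
begin

lemma zero [simp]: "p 0 = 0"
  using homog[of 0 0] by simp

lemma minus: "p (- x) = p x"
  using homog[of "- 1" x] scale_minus_left[of 1 x] by simp

lemma commute: "p (x - y) = p (y - x)"
  using minus[of "x - y"] by simp

lemma nonneg: "p x \<ge> 0"
  using triangle[of x "- x"] minus[of x] by simp

lemma triangle_diff: "p (x - z) \<le> p (x - y) + p (y - z)"
  using triangle[of "x - y" "y - z"] by simp

lemma reverse_triangle: "\<bar>p x - p y\<bar> \<le> p (x - y)"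
  using triangle[of "x - y" y] triangle[of "y - x" x] commute[of x y] by auto

lemma sum_le: "p (\<Sum>i\<in>S. g i) \<le> (\<Sum>i\<in>S. p (g i))"
  by (induction S rule: infinite_finite_induct) (auto intro: order_trans[OF triangle])

lemma scale_diff_le: "p (sm c u - sm c' u') \<le> norm c * p (u - u') + norm (c - c') * p u'"
proof -
  have "sm c u - sm c' u' = sm c (u - u') + sm (c - c') u'"
    by (simp add: scale_diff_right scale_diff_left)
  then show ?thesis
    using triangle[of "sm c (u - u')" "sm (c - c') u'"] by (simp add: homog)
qed

lemma average_le:
  assumes "m > 0" and "\<And>j. j < m \<Longrightarrow> p (v j) \<le> M"
  shows "p (sm (1 / of_nat m) (\<Sum>j<m. v j)) \<le> M"
proof -
  have "p (sm (1 / of_nat m) (\<Sum>j<m. v j)) = (1 / real m) * p (\<Sum>j<m. v j)"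
    by (simp add: homog norm_divide)
  also have "\<dots> \<le> (1 / real m) * (\<Sum>j<m. p (v j))"
    by (intro mult_left_mono sum_le) simp
  also have "\<dots> \<le> (1 / real m) * (\<Sum>j<m. M)"
    by (intro mult_left_mono sum_mono assms(2)) auto
  also have "\<dots> = M"
    using assms(1) by simp
  finally show ?thesis .
qed

end

definition seminorm_ball :: "('a::ab_group_add \<Rightarrow> real) set \<Rightarrow> 'a \<Rightarrow> real \<Rightarrow> 'a set" where
  "seminorm_ball Q x r = {y. \<forall>p\<in>Q. p (y - x) < r}"

lemma topspace_seminorm_topology [simp]: "topspace (seminorm_topology P) = UNIV"
  unfolding seminorm_topology_def by (simp add: topology_generated_by_topspace)

lemma openin_seminorm_semiball: "p \<in> P \<Longrightarrow> r > 0 \<Longrightarrow> openin (seminorm_topology P) {y. p (y - x) < r}"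
  unfolding seminorm_topology_def by (intro topology_generated_by_Basis) blast

locale clcs_space =
  fixes sm :: "complex \<Rightarrow> 'a::ab_group_add \<Rightarrow> 'a" and P :: "('a \<Rightarrow> real) set"
  assumes clcs: "clcs sm P"
begin

sublocale cvector_space sm
  using clcs by (simp add: clcs_def cvector_space_def)

lemma seminorm: "p \<in> P \<Longrightarrow> complex_seminorm sm p"
  using clcs by (auto simp: clcs_def complex_seminorm_def complex_seminorm_axioms_def
      cvector_space_axioms cseminorm_def)

lemma openin_seminorm_ball:
  "finite Q \<Longrightarrow> Q \<subseteq> P \<Longrightarrow> r > 0 \<Longrightarrow> openin (seminorm_topology P) (seminorm_ball Q x r)"
proof (induction Q rule: finite_induct)
  case empty
  then show ?case
    using openin_topspace[of "seminorm_topology P"] by (simp add: seminorm_ball_def)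
next
  case (insert p Q)
  have "seminorm_ball (insert p Q) x r = {y. p (y - x) < r} \<inter> seminorm_ball Q x r"
    by (auto simp: seminorm_ball_def)
  then show ?case
    using insert openin_seminorm_semiball[of p P r x] by auto
qed

lemma centre_in_seminorm_ball:
  assumes "r > 0" "Q \<subseteq> P"
  shows "x \<in> seminorm_ball Q x r"
proof -
  have "p (x - x) < r" if "p \<in> Q" for p
    using that assms complex_seminorm.zero[OF seminorm, of p] by auto
  then show ?thesis
    by (simp add: seminorm_ball_def)
qed

lemma seminorm_ball_subset_semiball:
  assumes "p \<in> P" "p (x - z) < r"
  shows "seminorm_ball {p} x (r - p (x - z)) \<subseteq> {y. p (y - z) < r}"
proof
  fix y
  assume "y \<in> seminorm_ball {p} x (r - p (x - z))"
  then have "p (y - x) < r - p (x - z)"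
    by (simp add: seminorm_ball_def)
  then show "y \<in> {y. p (y - z) < r}"
    using complex_seminorm.triangle_diff[OF seminorm[OF assms(1)], of y z x] by simp
qed

lemma openin_imp_seminorm_ball:
  assumes "openin (seminorm_topology P) S"
  shows "\<forall>x\<in>S. \<exists>Q r. finite Q \<and> Q \<subseteq> P \<and> r > 0 \<and> seminorm_ball Q x r \<subseteq> S"
proof -
  have "generate_topology_on (insert UNIV {{y. p (y - z) < r} | p z r. p \<in> P \<and> r > 0}) S"
    using assms unfolding seminorm_topology_def by (rule openin_topology_generated_by)
  then show ?thesis
  proof induction
    case (Int a b)
    show ?case
    proof
      fix x
      assume "x \<in> a \<inter> b"
      then obtain Q1 r1 Q2 r2 where "finite Q1" "Q1 \<subseteq> P" "r1 > 0" "seminorm_ball Q1 x r1 \<subseteq> a"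
        "finite Q2" "Q2 \<subseteq> P" "r2 > 0" "seminorm_ball Q2 x r2 \<subseteq> b"
        using Int.IH by (meson IntD1 IntD2)
      then show "\<exists>Q r. finite Q \<and> Q \<subseteq> P \<and> r > 0 \<and> seminorm_ball Q x r \<subseteq> a \<inter> b"
        by (intro exI[of _ "Q1 \<union> Q2"] exI[of _ "min r1 r2"]) (auto simp: seminorm_ball_def)
    qed
  next
    case (UN K)
    show ?case
    proof
      fix x
      assume "x \<in> \<Union>K"
      then obtain k where k: "k \<in> K" "x \<in> k"
        by blast
      then obtain Q r where "finite Q" "Q \<subseteq> P" "r > 0" "seminorm_ball Q x r \<subseteq> k"
        using UN.IH by meson
      with k(1) show "\<exists>Q r. finite Q \<and> Q \<subseteq> P \<and> r > 0 \<and> seminorm_ball Q x r \<subseteq> \<Union>K"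
        by (meson Union_upper subset_trans)
    qed
  next
    case (Basis s)
    then have "s = UNIV \<or> (\<exists>p z r. s = {y. p (y - z) < r} \<and> p \<in> P \<and> r > 0)"
      by auto
    then consider "s = UNIV" | p z r where "s = {y. p (y - z) < r}" "p \<in> P" "r > 0"
      by fast
    then show ?case
    proof cases
      case 1
      then show ?thesis
        by (auto intro!: exI[of _ "{}"] exI[of _ 1])
    next
      case 2
      show ?thesis
      proof
        fix x
        assume "x \<in> s"
        then have "p (x - z) < r"
          using 2 by simp
        with 2 seminorm_ball_subset_semiball[of p x z r]
        show "\<exists>Q r. finite Q \<and> Q \<subseteq> P \<and> r > 0 \<and> seminorm_ball Q x r \<subseteq> s"
          by (intro exI[of _ "{p}"] exI[of _ "r - p (x - z)"]) auto
      qed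
    qed
  qed simp
qed

lemma openin_seminorm_topology_iff:
  "openin (seminorm_topology P) S \<longleftrightarrow>
    (\<forall>x\<in>S. \<exists>Q r. finite Q \<and> Q \<subseteq> P \<and> r > 0 \<and> seminorm_ball Q x r \<subseteq> S)"
proof
  assume "\<forall>x\<in>S. \<exists>Q r. finite Q \<and> Q \<subseteq> P \<and> r > 0 \<and> seminorm_ball Q x r \<subseteq> S"
  then obtain Q where "\<forall>x\<in>S. \<exists>r. finite (Q x) \<and> Q x \<subseteq> P \<and> r > 0 \<and> seminorm_ball (Q x) x r \<subseteq> S"
    by (metis (no_types, lifting) bchoice)
  then obtain r where Qr: "\<And>x. x \<in> S \<Longrightarrow>
      finite (Q x) \<and> Q x \<subseteq> P \<and> r x > 0 \<and> seminorm_ball (Q x) x (r x) \<subseteq> S"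
    by (metis (no_types, lifting) bchoice)
  have "S = (\<Union>x\<in>S. seminorm_ball (Q x) x (r x))"
  proof
    show "S \<subseteq> (\<Union>x\<in>S. seminorm_ball (Q x) x (r x))"
    proof
      fix x
      assume "x \<in> S"
      then show "x \<in> (\<Union>x\<in>S. seminorm_ball (Q x) x (r x))"
        using Qr[of x] centre_in_seminorm_ball[of "r x" "Q x" x] by blast
    qed
    show "(\<Union>x\<in>S. seminorm_ball (Q x) x (r x)) \<subseteq> S"
      using Qr by (simp add: UN_least)
  qed
  moreover have "openin (seminorm_topology P) (\<Union>x\<in>S. seminorm_ball (Q x) x (r x))"
    using Qr openin_seminorm_ball by (intro openin_Union) auto
  ultimately show "openin (seminorm_topology P) S"
    by simp
qed (rule openin_imp_seminorm_ball)

lemma limitin_seminorm_topology_iff: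
  "limitin (seminorm_topology P) X l F \<longleftrightarrow> (\<forall>p\<in>P. \<forall>e>0. eventually (\<lambda>n. p (X n - l) < e) F)"
proof
  assume L: "limitin (seminorm_topology P) X l F"
  show "\<forall>p\<in>P. \<forall>e>0. eventually (\<lambda>n. p (X n - l) < e) F"
  proof (intro ballI allI impI)
    fix p and e :: real
    assume p: "p \<in> P" and "e > 0"
    then have "openin (seminorm_topology P) {y. p (y - l) < e}" "l \<in> {y. p (y - l) < e}"
      using openin_seminorm_semiball complex_seminorm.zero[OF seminorm[OF p]] by auto
    then show "eventually (\<lambda>n. p (X n - l) < e) F"
      using L unfolding limitin_def by fastforce
  qed
next
  assume H: "\<forall>p\<in>P. \<forall>e>0. eventually (\<lambda>n. p (X n - l) < e) F"
  show "limitin (seminorm_topology P) X l F"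
    unfolding limitin_def
  proof (intro conjI allI impI)
    fix S
    assume "openin (seminorm_topology P) S \<and> l \<in> S"
    then obtain Q r where Q: "finite Q" "Q \<subseteq> P" "r > 0" "seminorm_ball Q l r \<subseteq> S"
      using openin_imp_seminorm_ball by meson
    have "eventually (\<lambda>n. \<forall>p\<in>Q. p (X n - l) < r) F"
      using Q(1-3) H by (intro eventually_ball_finite) auto
    then show "eventually (\<lambda>n. X n \<in> S) F"
      by eventually_elim (use Q(4) in \<open>auto simp: seminorm_ball_def\<close>)
  qed simp
qed

lemma limitin_diff:
  assumes "limitin (seminorm_topology P) X a F" "limitin (seminorm_topology P) Y b F"
  shows "limitin (seminorm_topology P) (\<lambda>k. X k - Y k) (a - b) F"
  unfolding limitin_seminorm_topology_iff
proof (intro ballI allI impI)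
  fix p and e :: real
  assume p: "p \<in> P" and "e > 0"
  interpret p: complex_seminorm sm p
    using seminorm[OF p] .
  have "eventually (\<lambda>k. p (X k - a) < e / 2) F" "eventually (\<lambda>k. p (Y k - b) < e / 2) F"
    using assms[unfolded limitin_seminorm_topology_iff] p \<open>e > 0\<close> half_gt_zero by blast+
  then show "eventually (\<lambda>k. p (X k - Y k - (a - b)) < e) F"
  proof eventually_elim
    case (elim k)
    have "p (X k - Y k - (a - b)) \<le> p (X k - a) + p (b - Y k)"
      using p.triangle[of "X k - a" "b - Y k"] by (simp add: algebra_simps)
    then show ?case
      using elim p.commute[of b "Y k"] by simp
  qed
qed

lemma limitin_seminorm_le:
  assumes X: "limitin (seminorm_topology P) X u sequentially" and p: "p \<in> P"
    and bound: "\<And>k. p (X k) \<le> M"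
  shows "p u \<le> M"
proof (rule field_le_epsilon)
  fix e :: real
  assume "e > 0"
  interpret p: complex_seminorm sm p
    using seminorm[OF p] .
  have "eventually (\<lambda>k. p (X k - u) < e) sequentially"
    using X[unfolded limitin_seminorm_topology_iff] p \<open>e > 0\<close> by blast
  then obtain N where "p (X N - u) < e"
    unfolding eventually_sequentially by blast
  moreover have "p u \<le> p (X N) + p (u - X N)"
    using p.triangle[of "X N" "u - X N"] by simp
  ultimately show "p u \<le> M + e"
    using bound[of N] p.commute[of "X N" u] by linarith
qed

lemma scale_into_seminorm_ball:
  assumes "finite Q" "Q \<subseteq> P" "\<rho> > 0"
  obtains t :: real where "t \<ge> 1" "sm (of_real (1 / t)) y \<in> seminorm_ball Q 0 \<rho>"
proof
  define t where "t = 1 + (\<Sum>p\<in>Q. p y) / \<rho>"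
  have nonneg: "p \<in> Q \<Longrightarrow> p v \<ge> 0" for p v
    using assms(2) complex_seminorm.nonneg[OF seminorm] by blast
  show t: "t \<ge> 1"
    using nonneg assms(3) by (simp add: t_def sum_nonneg)
  have "p y / t < \<rho>" if "p \<in> Q" for p
  proof -
    have "p y \<le> (\<Sum>p\<in>Q. p y)"
      using member_le_sum[of p Q "\<lambda>p. p y"] nonneg assms(1) that by simp
    also have "\<dots> < t * \<rho>"
      using assms(3) by (simp add: t_def field_simps)
    finally show ?thesis
      using t by (simp add: divide_less_eq mult.commute)
  qed
  moreover have "p (sm (of_real (1 / t)) y) = p y / t" if "p \<in> Q" for p
    using t that assms(2) complex_seminorm.homog[OF seminorm, of p] by (auto simp: norm_divide)
  ultimately show "sm (of_real (1 / t)) y \<in> seminorm_ball Q 0 \<rho>"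
    by (simp add: seminorm_ball_def)
qed

lemma continuous_map_seminorm_topologyI:
  assumes E: "clcs_space smE PE"
    and cont: "\<And>y0 q e. q \<in> P \<Longrightarrow> e > 0 \<Longrightarrow> \<exists>Q r. finite Q \<and> Q \<subseteq> PE \<and> r > 0 \<and>
      (\<forall>y\<in>seminorm_ball Q y0 r. q (g y - g y0) < e)"
  shows "continuous_map (seminorm_topology PE) (seminorm_topology P) g"
  unfolding seminorm_topology_def[of P]
proof (rule continuous_on_generated_topo)
  fix S
  assume "S \<in> insert UNIV {{y. p (y - c) < r} |p c r. p \<in> P \<and> 0 < r}"
  then have "S = UNIV \<or> (\<exists>q c r. S = {y. q (y - c) < r} \<and> q \<in> P \<and> r > 0)"
    by auto
  then consider "S = UNIV" | q c r where "S = {y. q (y - c) < r}" "q \<in> P" "r > 0"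
    by fast
  then show "openin (seminorm_topology PE) (g -` S \<inter> topspace (seminorm_topology PE))"
  proof cases
    case 1
    then show ?thesis
      using openin_topspace[of "seminorm_topology PE"] by simp
  next
    case 2
    interpret q: complex_seminorm sm q
      using seminorm 2 by simp
    show ?thesis
      unfolding clcs_space.openin_seminorm_topology_iff[OF E]
    proof
      fix y0
      assume "y0 \<in> g -` S \<inter> topspace (seminorm_topology PE)"
      then have y0: "q (g y0 - c) < r"
        using 2 by simp
      then obtain Q r' where Q: "finite Q" "Q \<subseteq> PE" "r' > 0"
        "\<forall>y\<in>seminorm_ball Q y0 r'. q (g y - g y0) < r - q (g y0 - c)"
        using cont[of q "r - q (g y0 - c)" y0] 2 by auto
      have "seminorm_ball Q y0 r' \<subseteq> g -` S"
      proof
        fix y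
        assume "y \<in> seminorm_ball Q y0 r'"
        then have "q (g y - g y0) < r - q (g y0 - c)"
          using Q(4) by blast
        then show "y \<in> g -` S"
          using q.triangle_diff[of "g y" c "g y0"] 2 by simp
      qed
      with Q(1-3) show "\<exists>Q r. finite Q \<and> Q \<subseteq> PE \<and> 0 < r \<and>
          seminorm_ball Q y0 r \<subseteq> g -` S \<inter> topspace (seminorm_topology PE)"
        by (intro exI[of _ Q] exI[of _ r']) simp
    qed
  qed
qed simp

end

lemma clcs_complex_seminorms: "clcs (times :: complex \<Rightarrow> complex \<Rightarrow> complex) complex_seminorms"
  by (auto simp: clcs_def cvs_def cseminorm_def algebra_simps norm_mult norm_triangle_ineq)

interpretation complex_seminorms: clcs_space times complex_seminorms
  by (rule clcs_space.intro[OF clcs_complex_seminorms])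

lemma limitin_complex_seminorms_iff:
  "limitin (seminorm_topology complex_seminorms) X s F \<longleftrightarrow> (X \<longlongrightarrow> s) F"
  by (simp add: complex_seminorms.limitin_seminorm_topology_iff tendsto_iff dist_norm)

section \<open>Multilinear maps and polarization\<close>

lemma cmultilinear_cong: "cmultilinear smE smF n A \<Longrightarrow> (\<And>i. i < n \<Longrightarrow> v i = w i) \<Longrightarrow> A v = A w"
  unfolding cmultilinear_def by blast

lemma cmultilinear_add:
  "cmultilinear smE smF n A \<Longrightarrow> i < n \<Longrightarrow> A (v(i := y + z)) = A (v(i := y)) + A (v(i := z))"
  unfolding cmultilinear_def clinear_map_def by blast

lemma cmultilinear_scale:
  "cmultilinear smE smF n A \<Longrightarrow> i < n \<Longrightarrow> A (v(i := smE c y)) = smF c (A (v(i := y)))"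
  unfolding cmultilinear_def clinear_map_def by blast

lemma cmultilinear_zero: "cmultilinear smE smF n A \<Longrightarrow> i < n \<Longrightarrow> A (v(i := 0)) = 0"
  using cmultilinear_add[of smE smF n A i v 0 0] by simp

lemma cmultilinear_sum:
  assumes A: "cmultilinear smE smF n A" and i: "i < n" and S: "finite S"
  shows "A (v(i := \<Sum>a\<in>S. w a)) = (\<Sum>a\<in>S. A (v(i := w a)))"
  using S
proof (induction S rule: finite_induct)
  case empty
  show ?case
    by (simp only: sum.empty cmultilinear_zero[OF A i])
next
  case (insert a S)
  have "A (v(i := \<Sum>a\<in>insert a S. w a)) = A (v(i := w a + (\<Sum>a\<in>S. w a)))"
    by (simp only: sum.insert[OF insert(1,2)])
  also have "\<dots> = A (v(i := w a)) + (\<Sum>a\<in>S. A (v(i := w a)))"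
    by (simp only: cmultilinear_add[OF A i] insert.IH)
  finally show ?case
    by (simp only: sum.insert[OF insert(1,2)])
qed

lemma cmultilinear_diag_scale:
  assumes A: "cmultilinear smE smF n A" and F: "cvector_space smF"
  shows "A (\<lambda>_. smE c y) = smF (c ^ n) (A (\<lambda>_. y))"
proof -
  have "A (\<lambda>j. if j < k then smE c y else y) = smF (c ^ k) (A (\<lambda>_. y))" if "k \<le> n" for k
    using that
  proof (induction k)
    case 0
    then show ?case
      using cvector_space.scale_one[OF F] by simp
  next
    case (Suc k)
    define g where "g = (\<lambda>j. if j < k then smE c y else y)"
    have "(\<lambda>j. if j < Suc k then smE c y else y) = g(k := smE c y)" "g(k := y) = g"
      by (auto simp: g_def)
    then show ?case
      using cmultilinear_scale[OF A, of k g c y] Suc cvector_space.scale_mult[OF F, of c "c ^ k"]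
      by (simp add: g_def)
  qed
  from this[of n] show ?thesis
    using cmultilinear_cong[OF A, of "\<lambda>_. smE c y" "\<lambda>j. if j < n then smE c y else y"] by simp
qed

lemma chom_poly_scale:
  "chom_poly smE smF n p \<Longrightarrow> cvector_space smF \<Longrightarrow> p (smE c y) = smF (c ^ n) (p y)"
  unfolding chom_poly_def using cmultilinear_diag_scale by metis

lemma cmultilinear_expand_prefix:
  assumes A: "cmultilinear smE smF n A" and S: "finite S" and "k \<le> n"
  shows "A (\<lambda>j. if j < k then (\<Sum>i\<in>S. w i) else u j) =
      (\<Sum>\<phi>\<in>PiE {..<k} (\<lambda>_. S). A (\<lambda>j. if j < k then w (\<phi> j) else u j))"
  using \<open>k \<le> n\<close>
proof (induction k arbitrary: u)
  case (Suc k)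
  define v where "v = (\<lambda>j. if j < k then (\<Sum>i\<in>S. w i) else u j)"
  have "(\<lambda>j. if j < Suc k then (\<Sum>i\<in>S. w i) else u j) = v(k := (\<Sum>i\<in>S. w i))"
    by (auto simp: v_def)
  moreover have "v(k := w i) = (\<lambda>j. if j < k then (\<Sum>i\<in>S. w i) else (u(k := w i)) j)" for i
    by (auto simp: v_def)
  ultimately have "A (\<lambda>j. if j < Suc k then (\<Sum>i\<in>S. w i) else u j) =
      (\<Sum>i\<in>S. A (\<lambda>j. if j < k then (\<Sum>i\<in>S. w i) else (u(k := w i)) j))"
    using cmultilinear_sum[OF A _ S] Suc.prems by simp
  also have "\<dots> = (\<Sum>i\<in>S. \<Sum>\<phi>\<in>PiE {..<k} (\<lambda>_. S).
      A (\<lambda>j. if j < k then w (\<phi> j) else (u(k := w i)) j))"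
    using Suc by simp
  also have "\<dots> = (\<Sum>(i, \<phi>)\<in>S \<times> PiE {..<k} (\<lambda>_. S).
      A (\<lambda>j. if j < Suc k then w ((\<phi>(k := i)) j) else u j))"
  proof -
    have "(\<lambda>j. if j < k then w (\<phi> j) else (u(k := w i)) j) =
        (\<lambda>j. if j < Suc k then w ((\<phi>(k := i)) j) else u j)" for i \<phi>
      by (auto simp: fun_eq_iff)
    then show ?thesis
      by (simp add: sum.cartesian_product)
  qed
  also have "\<dots> = (\<Sum>\<psi>\<in>(\<lambda>(y, g). g(k := y)) ` (S \<times> PiE {..<k} (\<lambda>_. S)).
      A (\<lambda>j. if j < Suc k then w (\<psi> j) else u j))"
    using inj_combinator[of k "{..<k}" "\<lambda>_. S"]
    by (subst sum.reindex) (simp_all add: comp_def case_prod_unfold)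
  also have "(\<lambda>(y, g). g(k := y)) ` (S \<times> PiE {..<k} (\<lambda>_. S)) = PiE {..<Suc k} (\<lambda>_. S)"
    using PiE_insert_eq[of k "{..<k}" "\<lambda>_. S"] by (simp add: lessThan_Suc)
  finally show ?case .
qed simp

lemma cmultilinear_expand:
  assumes A: "cmultilinear smE smF n A" and S: "finite S"
  shows "A (\<lambda>_. \<Sum>i\<in>S. w i) = (\<Sum>\<phi>\<in>PiE {..<n} (\<lambda>_. S). A (\<lambda>j. w (\<phi> j)))"
proof -
  have "A (\<lambda>_. \<Sum>i\<in>S. w i) = A (\<lambda>j. if j < n then (\<Sum>i\<in>S. w i) else 0)"
    by (rule cmultilinear_cong[OF A]) simp
  also have "\<dots> = (\<Sum>\<phi>\<in>PiE {..<n} (\<lambda>_. S). A (\<lambda>j. if j < n then w (\<phi> j) else 0))"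
    using cmultilinear_expand_prefix[OF A S, of n w "\<lambda>_. 0"] by simp
  also have "\<dots> = (\<Sum>\<phi>\<in>PiE {..<n} (\<lambda>_. S). A (\<lambda>j. w (\<phi> j)))"
    by (intro sum.cong refl cmultilinear_cong[OF A]) simp
  finally show ?thesis .
qed

lemma sum_supersets_alternating:
  assumes "finite N" "T \<subseteq> N"
  shows "(\<Sum>S\<in>{S\<in>Pow N. T \<subseteq> S}. (-1::'b::ring_1) ^ (card N - card S)) = (if T = N then 1 else 0)"
proof (cases "T = N")
  case True
  then have "{S\<in>Pow N. T \<subseteq> S} = {N}"
    by auto
  with True show ?thesis
    by simp
next
  case False
  then have TN: "T \<subset> N"
    using assms(2) by blast
  have fin: "finite {S\<in>Pow N. T \<subseteq> S}"
    using assms(1) by simp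
  have "(-1::'b) ^ (card N - card S) = (-1) ^ card N * (-1) ^ card S" if "S \<subseteq> N" for S
    using that assms(1) by (simp add: card_mono neg_one_power_add_eq_neg_one_power_diff
        flip: power_add)
  then have "(\<Sum>S\<in>{S\<in>Pow N. T \<subseteq> S}. (-1::'b) ^ (card N - card S)) =
      (-1) ^ card N * (\<Sum>S\<in>{S\<in>Pow N. T \<subseteq> S}. (-1) ^ card S)"
    by (simp add: sum_distrib_left)
  also have "(\<Sum>S\<in>{S\<in>Pow N. T \<subseteq> S}. (-1::'b) ^ card S) = 0"
  proof (rule sum_alternating_cancels[OF fin])
    show "card {S \<in> {S\<in>Pow N. T \<subseteq> S}. even (card S)} = card {S \<in> {S\<in>Pow N. T \<subseteq> S}. odd (card S)}"
      using card_subsupersets_even_odd[OF assms(1) TN] by (simp add: conj_assoc)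
  qed
  finally show ?thesis
    using False by simp
qed

definition bij_maps :: "nat \<Rightarrow> (nat \<Rightarrow> nat) set" where
  "bij_maps n = {\<phi> \<in> PiE {..<n} (\<lambda>_. {..<n}). \<phi> ` {..<n} = {..<n}}"

lemma finite_bij_maps: "finite (bij_maps n)"
  unfolding bij_maps_def by (rule finite_subset[OF _ finite_PiE[of "{..<n}" "\<lambda>_. {..<n}"]]) auto

lemma card_bij_maps_pos: "card (bij_maps n) > 0"
proof -
  have "restrict id {..<n} \<in> bij_maps n"
    unfolding bij_maps_def by auto
  then show ?thesis
    using finite_bij_maps card_gt_0_iff by blast
qed

definition symmetrize :: "nat \<Rightarrow> ((nat \<Rightarrow> 'a) \<Rightarrow> 'b::comm_monoid_add) \<Rightarrow> (nat \<Rightarrow> 'a) \<Rightarrow> 'b" where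
  "symmetrize n B v = (\<Sum>\<phi>\<in>bij_maps n. B (\<lambda>j. v (\<phi> j)))"

text \<open>Expanding each \<open>B(\<Sum>\<^sub>i\<^sub>\<in>\<^sub>S v\<^sub>i, \<dots>)\<close> multilinearly, a map \<open>\<phi>\<close> of the slots into \<open>{..<n}\<close>
  survives the alternating sum over \<open>S\<close> exactly when it is onto.\<close>
lemma polarization:
  assumes B: "cmultilinear smE times n B"
  shows "(\<Sum>S\<in>Pow {..<n}. (-1) ^ (n - card S) * B (\<lambda>_. \<Sum>i\<in>S. v i)) = symmetrize n B v"
proof -
  define N where "N = {..<n}"
  define G where "G = (\<lambda>\<phi>. B (\<lambda>j. v (\<phi> j)))"
  have fN: "finite N" and fP: "finite (PiE N (\<lambda>_. N))" and cN: "card N = n"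
    by (simp_all add: N_def finite_PiE)
  have expand: "B (\<lambda>_. \<Sum>i\<in>S. v i) = (\<Sum>\<phi>\<in>PiE N (\<lambda>_. N). if \<phi> ` N \<subseteq> S then G \<phi> else 0)"
    if S: "S \<subseteq> N" for S
  proof -
    have "B (\<lambda>_. \<Sum>i\<in>S. v i) = (\<Sum>\<phi>\<in>PiE N (\<lambda>_. S). G \<phi>)"
      using cmultilinear_expand[OF B finite_subset[OF S fN], of v] by (simp add: N_def G_def)
    also have "PiE N (\<lambda>_. S) = {\<phi> \<in> PiE N (\<lambda>_. N). \<phi> ` N \<subseteq> S}"
      using S by (auto simp: PiE_iff extensional_def)
    finally show ?thesis
      by (simp add: sum.inter_filter[OF fP])
  qed
  have "(\<Sum>S\<in>Pow N. (-1) ^ (n - card S) * B (\<lambda>_. \<Sum>i\<in>S. v i)) =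
      (\<Sum>S\<in>Pow N. \<Sum>\<phi>\<in>PiE N (\<lambda>_. N). (if \<phi> ` N \<subseteq> S then (-1) ^ (n - card S) else 0) * G \<phi>)"
    by (rule sum.cong[OF refl]) (auto simp: expand sum_distrib_left intro!: sum.cong)
  also have "\<dots> = (\<Sum>\<phi>\<in>PiE N (\<lambda>_. N). \<Sum>S\<in>Pow N. (if \<phi> ` N \<subseteq> S then (-1) ^ (n - card S) else 0) * G \<phi>)"
    by (rule sum.swap)
  also have "\<dots> = (\<Sum>\<phi>\<in>PiE N (\<lambda>_. N). if \<phi> ` N = N then G \<phi> else 0)"
  proof (rule sum.cong[OF refl])
    fix \<phi>
    assume "\<phi> \<in> PiE N (\<lambda>_. N)"
    then have "\<phi> ` N \<subseteq> N"
      by (auto simp: PiE_iff)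
    have "(\<Sum>S\<in>Pow N. if \<phi> ` N \<subseteq> S then (-1::complex) ^ (card N - card S) else 0) =
        (\<Sum>S\<in>{S\<in>Pow N. \<phi> ` N \<subseteq> S}. (-1::complex) ^ (card N - card S))"
      using fN by (simp only: sum.inter_filter finite_Pow_iff)
    also have "\<dots> = (if \<phi> ` N = N then 1 else 0)"
      by (rule sum_supersets_alternating[OF fN \<open>\<phi> ` N \<subseteq> N\<close>])
    finally have "(\<Sum>S\<in>Pow N. if \<phi> ` N \<subseteq> S then (-1::complex) ^ (card N - card S) else 0) =
        (if \<phi> ` N = N then 1 else 0)" .
    moreover have "(\<Sum>S\<in>Pow N. (if \<phi> ` N \<subseteq> S then (-1) ^ (n - card S) else 0) * G \<phi>) =
        (\<Sum>S\<in>Pow N. if \<phi> ` N \<subseteq> S then (-1::complex) ^ (card N - card S) else 0) * G \<phi>"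
      unfolding cN sum_distrib_right by (rule refl)
    ultimately show "(\<Sum>S\<in>Pow N. (if \<phi> ` N \<subseteq> S then (-1) ^ (n - card S) else 0) * G \<phi>) =
        (if \<phi> ` N = N then G \<phi> else 0)"
      by simp
  qed
  also have "\<dots> = symmetrize n B v"
    unfolding symmetrize_def bij_maps_def N_def[symmetric] G_def
    by (simp add: sum.inter_filter[OF fP])
  finally show ?thesis
    by (simp add: N_def)
qed

lemma bij_maps_slot:
  assumes B: "cmultilinear smE smF n B" and \<phi>: "\<phi> \<in> bij_maps n" and i: "i < n"
  obtains j0 where "j0 < n" "\<And>v y. B (\<lambda>j. (v(i := y)) (\<phi> j)) = B ((\<lambda>j. v (\<phi> j))(j0 := y))"
proof -
  have img: "\<phi> ` {..<n} = {..<n}"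
    using \<phi> by (simp add: bij_maps_def)
  then obtain j0 where j0: "j0 < n" "\<phi> j0 = i"
    using i by (metis imageE lessThan_iff)
  have "inj_on \<phi> {..<n}"
    using img by (simp add: eq_card_imp_inj_on)
  then have "\<phi> j = i \<longleftrightarrow> j = j0" if "j < n" for j
    using that j0 by (auto simp: inj_on_def)
  then have "B (\<lambda>j. (v(i := y)) (\<phi> j)) = B ((\<lambda>j. v (\<phi> j))(j0 := y))" for v y
    by (intro cmultilinear_cong[OF B]) simp
  with j0 show thesis
    using that by blast
qed

lemma symmetrize_add:
  assumes B: "cmultilinear smE times n B" and i: "i < n"
  shows "symmetrize n B (v(i := y + z)) = symmetrize n B (v(i := y)) + symmetrize n B (v(i := z))"
  unfolding symmetrize_def sum.distrib[symmetric]
proof (rule sum.cong[OF refl])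
  fix \<phi>
  assume "\<phi> \<in> bij_maps n"
  then obtain j0 where "j0 < n" "\<And>v y. B (\<lambda>j. (v(i := y)) (\<phi> j)) = B ((\<lambda>j. v (\<phi> j))(j0 := y))"
    using bij_maps_slot[OF B _ i] by blast
  then show "B (\<lambda>j. (v(i := y + z)) (\<phi> j)) = B (\<lambda>j. (v(i := y)) (\<phi> j)) + B (\<lambda>j. (v(i := z)) (\<phi> j))"
    using cmultilinear_add[OF B] by simp
qed

lemma symmetrize_scale:
  assumes B: "cmultilinear smE times n B" and i: "i < n"
  shows "symmetrize n B (v(i := smE c y)) = c * symmetrize n B (v(i := y))"
  unfolding symmetrize_def sum_distrib_left
proof (rule sum.cong[OF refl])
  fix \<phi>
  assume "\<phi> \<in> bij_maps n"
  then obtain j0 where "j0 < n" "\<And>v y. B (\<lambda>j. (v(i := y)) (\<phi> j)) = B ((\<lambda>j. v (\<phi> j))(j0 := y))"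
    using bij_maps_slot[OF B _ i] by blast
  then show "B (\<lambda>j. (v(i := smE c y)) (\<phi> j)) = c * B (\<lambda>j. (v(i := y)) (\<phi> j))"
    using cmultilinear_scale[OF B] by simp
qed

lemma symmetrize_diag: "symmetrize n B (\<lambda>_. y) = of_nat (card (bij_maps n)) * B (\<lambda>_. y)"
  by (simp add: symmetrize_def)

section \<open>Power series and roots of unity\<close>

lemma power_series_coeffs_unique:
  fixes a b :: "nat \<Rightarrow> complex"
  assumes s: "s > 0"
    and a: "\<And>z. norm z < s \<Longrightarrow> (\<lambda>n. a n * z ^ n) sums g z"
    and b: "\<And>z. norm z < s \<Longrightarrow> (\<lambda>n. b n * z ^ n) sums g z"
  shows "a n = b n"
proof -
  define d where "d = (\<lambda>n. a n - b n)"
  have d: "(\<lambda>n. d n * z ^ n) sums 0" if "norm z < s" for z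
    using sums_diff[OF a[OF that] b[OF that]] by (simp add: d_def algebra_simps)
  have "d n = 0"
  proof (induction n rule: less_induct)
    case (less n)
    have "(\<lambda>k. d (k + n) * z ^ k) sums 0" if z: "z \<noteq> 0" "norm z < s" for z
    proof -
      have "(\<lambda>k. d (k + n) * z ^ (k + n)) sums (0 - (\<Sum>k<n. d k * z ^ k))"
        using sums_split_initial_segment[OF d[OF z(2)], of n] by simp
      then have "(\<lambda>k. (1 / z ^ n) * (d (k + n) * z ^ (k + n))) sums 0"
        using less sums_mult[of _ 0 "1 / z ^ n"] by simp
      moreover have "(1 / z ^ n) * (d (k + n) * z ^ (k + n)) = d (k + n) * z ^ k" for k
        using z by (simp add: power_add field_simps)
      ultimately show ?thesis
        by simp
    qed
    then have "((\<lambda>z::complex. 0::complex) \<longlongrightarrow> d (0 + n)) (at 0)"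
      using powser_limit_0_strong[OF s, where a = "\<lambda>k. d (k + n)" and f = "\<lambda>_. 0"] by auto
    then show ?case
      using LIM_unique[OF _ tendsto_const[of "0::complex" "at (0::complex)"]] by simp
  qed
  then show ?thesis
    by (simp add: d_def)
qed

lemma holomorphic_on_if_local_power_series:
  assumes "open S"
    and "\<And>z0. z0 \<in> S \<Longrightarrow> \<exists>\<delta>>0. \<exists>c. \<forall>z\<in>ball z0 \<delta>. (\<lambda>n. c n * (z - z0) ^ n) sums g z"
  shows "g holomorphic_on S"
proof -
  have "\<exists>g'. (g has_field_derivative g') (at z0)" if z0: "z0 \<in> S" for z0
  proof -
    obtain \<delta> c where "\<delta> > 0" "\<forall>z\<in>ball z0 \<delta>. (\<lambda>n. c n * (z - z0) ^ n) sums g z"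
      using assms(2)[OF z0] by blast
    then have "g holomorphic_on ball z0 \<delta>"
      by (intro power_series_holomorphic) auto
    then show ?thesis
      using holomorphic_on_open[of "ball z0 \<delta>" g] \<open>\<delta> > 0\<close> by auto
  qed
  then show ?thesis
    using holomorphic_on_open[OF assms(1)] by blast
qed

lemma norm_cis_diff: "norm (cis a - cis b) \<le> \<bar>a - b\<bar>"
proof -
  have "norm (cis t - 1) \<le> \<bar>t\<bar>" for t
  proof -
    have "(norm (cis t - 1))\<^sup>2 = (cos t - 1)\<^sup>2 + (sin t)\<^sup>2"
      by (simp add: cmod_def)
    also have "\<dots> = 2 - 2 * cos t"
      using sin_cos_squared_add[of t] by (simp add: power2_eq_square algebra_simps)
    also have "\<dots> = (2 * sin (t / 2))\<^sup>2"
      using cos_double_sin[of "t / 2"] by (simp add: power2_eq_square algebra_simps)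
    finally have "norm (cis t - 1) = \<bar>2 * sin (t / 2)\<bar>"
      by (metis norm_ge_zero real_sqrt_abs real_sqrt_unique)
    then show ?thesis
      using abs_sin_x_le_abs_x[of "t / 2"] by simp
  qed
  moreover have "cis a - cis b = cis b * (cis (a - b) - 1)"
    by (simp add: algebra_simps cis_mult)
  ultimately show ?thesis
    by (simp add: norm_mult)
qed

lemma sum_roots_of_unity_power:
  fixes d :: int
  assumes "d \<noteq> 0" "\<bar>d\<bar> < int m"
  shows "(\<Sum>j<m. cis (2 * pi * real j * of_int d / real m)) = 0"
proof -
  have m: "m > 0"
    using assms by linarith
  define w where "w = cis (2 * pi * of_int d / real m)"
  have pw: "cis (2 * pi * real j * of_int d / real m) = w ^ j" for j
    unfolding w_def Complex.DeMoivre by (rule arg_cong[where f = cis]) (simp add: field_simps)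
  have "w \<noteq> 1"
  proof
    assume "w = 1"
    then obtain k :: int where "2 * pi * of_int d / real m = of_int k * (2 * pi)"
      unfolding w_def cis_eq_1_iff by blast
    then have "of_int d = of_int k * real m"
      using m by (simp add: field_simps)
    then have "d = k * int m"
      by (metis of_int_eq_iff of_int_mult of_int_of_nat_eq)
    with assms show False
      by (cases "k = 0") (auto simp: abs_mult dest!: mult_le_cancel_left1[THEN iffD1])
  qed
  moreover have "w ^ m = 1"
    using m by (simp add: w_def Complex.DeMoivre cis_eq_1_iff)
  ultimately show ?thesis
    unfolding pw by (simp add: sum_gp_strict)
qed

text \<open>The discrete version of \<open>(2\<pi>)\<^sup>-\<^sup>1 \<integral> \<zeta>\<^sup>-\<^sup>n \<zeta>\<^sup>i d\<theta>\<close> over the \<open>m\<close>-th roots of unity: it is \<open>1\<close> for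
  \<open>i = n\<close> and \<open>0\<close> for other \<open>i < m\<close> (aliasing only occurs from \<open>i \<ge> m\<close> on).\<close>
definition root_avg :: "nat \<Rightarrow> nat \<Rightarrow> nat \<Rightarrow> complex" where
  "root_avg m n i = (1 / of_nat m) *
     (\<Sum>j<m. cnj (cis (2 * pi * real j / real m)) ^ n * cis (2 * pi * real j / real m) ^ i)"

lemma root_avg_summand:
  "cnj (cis (2 * pi * real j / real m)) ^ n * cis (2 * pi * real j / real m) ^ i =
    cis (2 * pi * real j * of_int (int i - int n) / real m)"
  by (simp add: cis_cnj Complex.DeMoivre cis_mult power_mult_distrib[symmetric])
     (rule arg_cong[where f = cis]; cases "m = 0"; simp add: field_simps)

lemma root_avg_same: "m > 0 \<Longrightarrow> root_avg m n n = 1"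
  unfolding root_avg_def root_avg_summand by simp

lemma root_avg_other: "i < m \<Longrightarrow> n < m \<Longrightarrow> i \<noteq> n \<Longrightarrow> root_avg m n i = 0"
  unfolding root_avg_def root_avg_summand by (subst sum_roots_of_unity_power) auto

lemma norm_root_avg_le: "m > 0 \<Longrightarrow> norm (root_avg m n i) \<le> 1"
proof -
  assume "m > 0"
  have "norm (\<Sum>j<m. cnj (cis (2 * pi * real j / real m)) ^ n * cis (2 * pi * real j / real m) ^ i) \<le>
      (\<Sum>j<m. norm (cnj (cis (2 * pi * real j / real m)) ^ n * cis (2 * pi * real j / real m) ^ i))"
    by (rule norm_sum)
  also have "\<dots> = real m"
    by (simp add: norm_mult norm_power)
  finally show ?thesis
    using \<open>m > 0\<close> by (simp add: root_avg_def norm_mult norm_divide field_simps)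
qed

definition unit_root :: "nat \<Rightarrow> nat \<Rightarrow> complex" where
  "unit_root k j = cis (2 * pi * real j / real (2 ^ k))"

lemma norm_unit_root [simp]: "norm (unit_root k j) = 1"
  by (simp add: unit_root_def)

lemma dist_unit_root_refine:
  assumes "k \<le> k'"
  shows "norm (unit_root k' j - unit_root k (j div 2 ^ (k' - k))) < 2 * pi / 2 ^ k"
proof -
  define d :: nat where "d = 2 ^ (k' - k)"
  define P :: real where "P = 2 ^ k'"
  have md: "P = 2 ^ k * real d" and d0: "d > 0" and P: "P > 0"
    using assms by (simp_all add: P_def d_def power_add[symmetric])
  have jd: "real j = real d * real (j div d) + real (j mod d)"
    by (metis div_mult_mod_eq of_nat_add of_nat_mult mult.commute)
  have "2 * pi * real j / real (2 ^ k') - 2 * pi * real (j div d) / real (2 ^ k) =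
      2 * pi * (real j - real d * real (j div d)) / P"
    using md d0 unfolding P_def by (simp add: field_simps)
  also have "\<dots> = 2 * pi * real (j mod d) / P"
    using jd by simp
  finally have diff: "2 * pi * real j / real (2 ^ k') - 2 * pi * real (j div d) / real (2 ^ k) =
      2 * pi * real (j mod d) / P" .
  have "2 * pi * real (j mod d) / P < 2 * pi * real d / P"
    using d0 P pi_gt_zero by (intro divide_strict_right_mono) auto
  also have "2 * pi * real d / P = 2 * pi / 2 ^ k"
    using md d0 by (simp add: field_simps)
  finally show ?thesis
    using norm_cis_diff[of "2 * pi * real j / real (2 ^ k')" "2 * pi * real (j div d) / real (2 ^ k)"]
      P pi_gt_zero unfolding unit_root_def d_def[symmetric] diff by simp
qed

lemma sum_lessThan_mult_div:
  fixes G :: "nat \<Rightarrow> 'c::comm_monoid_add"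
  shows "(\<Sum>j<m * d. G (j div d)) = (\<Sum>a<m. \<Sum>i<d. G a)"
proof -
  have "(\<Sum>j<m * d. G (j div d)) = (\<Sum>a<m. \<Sum>j\<in>{a * d..<a * d + d}. G (j div d))"
    by (rule sum.nat_group[symmetric])
  also have "\<dots> = (\<Sum>a<m. \<Sum>j\<in>{a * d..<a * d + d}. G a)"
    by (intro sum.cong refl arg_cong[where f = G]) (auto intro: div_nat_eqI simp: algebra_simps)
  also have "\<dots> = (\<Sum>a<m. \<Sum>i<d. G a)"
    using sum.shift_bounds_nat_ivl[of "\<lambda>_. G _" 0 "_ * d" d]
    by (simp add: add.commute atLeast0LessThan)
  finally show ?thesis .
qed

lemma sum_half_powers: "N \<le> N' \<Longrightarrow> (\<Sum>n\<in>{N..<N'}. (1/2::real) ^ n) = 2 * (1/2) ^ N - 2 * (1/2) ^ N'"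
  by (induction N' rule: dec_induct) (simp_all add: sum.atLeastLessThan_Suc)

context clcs_space
begin

lemma partial_sums_diff_le_geometric:
  assumes p: "p \<in> P" and M: "M \<ge> 0" "\<And>n. p (a n) \<le> M * (1/2) ^ n" and "N \<le> N'"
  shows "p ((\<Sum>n<N'. a n) - (\<Sum>n<N. a n)) \<le> 2 * M * (1/2) ^ N"
proof -
  interpret p: complex_seminorm sm p
    using seminorm[OF p] .
  have "(\<Sum>n<N'. a n) - (\<Sum>n<N. a n) = (\<Sum>n\<in>{N..<N'}. a n)"
    using sum_diff_nat_ivl[of 0 N N' a] \<open>N \<le> N'\<close> by (simp add: atLeast0LessThan)
  then have "p ((\<Sum>n<N'. a n) - (\<Sum>n<N. a n)) \<le> (\<Sum>n\<in>{N..<N'}. p (a n))"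
    using p.sum_le[of a "{N..<N'}"] by simp
  also have "\<dots> \<le> (\<Sum>n\<in>{N..<N'}. M * (1/2) ^ n)"
    by (rule sum_mono) (rule M(2))
  also have "\<dots> = M * (2 * (1/2) ^ N - 2 * (1/2) ^ N')"
    by (simp add: sum_distrib_left[symmetric] sum_half_powers[OF \<open>N \<le> N'\<close>])
  also have "\<dots> \<le> 2 * M * (1/2) ^ N"
    using M(1) by (simp add: algebra_simps)
  finally show ?thesis .
qed

lemma seminorm_Cauchy_partial_sums:
  assumes geometric: "\<And>p. p \<in> P \<Longrightarrow> \<exists>M\<ge>0. \<forall>n. p (a n) \<le> M * (1/2) ^ n"
  shows "seminorm_Cauchy P (\<lambda>N. \<Sum>n<N. a n)"
  unfolding seminorm_Cauchy_def
proof (intro ballI allI impI)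
  fix p and e :: real
  assume p: "p \<in> P" and e: "e > 0"
  obtain M where M: "M \<ge> 0" "\<And>n. p (a n) \<le> M * (1/2) ^ n"
    using geometric[OF p] by blast
  have "(\<lambda>N. 2 * M * (1/2::real) ^ N) \<longlonglongrightarrow> 2 * M * 0"
    by (intro tendsto_mult_left LIMSEQ_power_zero) simp
  then have "eventually (\<lambda>k. 2 * M * (1/2::real) ^ k < e) sequentially"
    using order_tendstoD(2) e by simp
  then obtain N where N: "\<And>k. k \<ge> N \<Longrightarrow> 2 * M * (1/2::real) ^ k < e"
    unfolding eventually_sequentially by blast
  show "\<exists>N. \<forall>m\<ge>N. \<forall>m'\<ge>N. p ((\<Sum>n<m. a n) - (\<Sum>n<m'. a n)) < e"
  proof (intro exI[of _ N] allI impI)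
    fix m m'
    assume "m \<ge> N" "m' \<ge> N"
    then show "p ((\<Sum>n<m. a n) - (\<Sum>n<m'. a n)) < e"
      using partial_sums_diff_le_geometric[OF p M, of m' m] partial_sums_diff_le_geometric[OF p M, of m m']
        N[of m] N[of m'] complex_seminorm.commute[OF seminorm[OF p], of "\<Sum>n<m. a n" "\<Sum>n<m'. a n"]
      by (cases "m' \<le> m") auto
  qed
qed

end

section \<open>Weakly analytic maps\<close>

locale weakly_analytic =
  fixes smE :: "complex \<Rightarrow> 'a::ab_group_add \<Rightarrow> 'a" and PE :: "('a \<Rightarrow> real) set"
    and smF :: "complex \<Rightarrow> 'b::ab_group_add \<Rightarrow> 'b" and PF :: "('b \<Rightarrow> real) set"
    and U :: "'a set" and f :: "'a \<Rightarrow> 'b" and \<Lambda> :: "('b \<Rightarrow> complex) set"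
  assumes E: "clcs smE PE"
    and F: "clcs smF PF" and Fcomplete: "seq_complete_lcs PF"
    and U: "openin (seminorm_topology PE) U"
    and \<Lambda>_lin: "\<forall>l\<in>\<Lambda>. clinear_map smF times l \<and>
                   continuous_map (seminorm_topology PF) euclidean l"
    and \<Lambda>_sep: "\<forall>x. x \<noteq> 0 \<longrightarrow> (\<exists>l\<in>\<Lambda>. l x \<noteq> 0)"
    and f_cont: "continuous_map (subtopology (seminorm_topology PE) U) (seminorm_topology PF) f"
    and weak: "\<forall>l\<in>\<Lambda>. canalytic smE PE times complex_seminorms U (l \<circ> f)"
begin

sublocale E: clcs_space smE PE
  by (rule clcs_space.intro[OF E])

sublocale F: clcs_space smF PF
  by (rule clcs_space.intro[OF F])

lemma functional_add: "l \<in> \<Lambda> \<Longrightarrow> l (u + w) = l u + l w"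
  using \<Lambda>_lin by (simp add: clinear_map_def)

lemma functional_scale: "l \<in> \<Lambda> \<Longrightarrow> l (smF c u) = c * l u"
  using \<Lambda>_lin by (simp add: clinear_map_def)

lemma functional_zero: "l \<in> \<Lambda> \<Longrightarrow> l 0 = 0"
  using functional_add[of l 0 0] by simp

lemma functional_diff: "l \<in> \<Lambda> \<Longrightarrow> l (u - w) = l u - l w"
  using functional_add[of l "u - w" w] by (simp add: algebra_simps)

lemma functional_sum: "l \<in> \<Lambda> \<Longrightarrow> l (\<Sum>i\<in>S. g i) = (\<Sum>i\<in>S. l (g i))"
  by (induction S rule: infinite_finite_induct) (auto simp: functional_add functional_zero)

lemma functionals_eqI:
  assumes "\<And>l. l \<in> \<Lambda> \<Longrightarrow> l u = l w"
  shows "u = w"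
proof (rule ccontr)
  assume "u \<noteq> w"
  then have "u - w \<noteq> 0"
    by simp
  then obtain l where "l \<in> \<Lambda>" "l (u - w) \<noteq> 0"
    using \<Lambda>_sep by blast
  then show False
    using assms[of l] functional_diff[of l u w] by simp
qed

lemma functional_tendsto:
  assumes "limitin (seminorm_topology PF) X s sequentially" "l \<in> \<Lambda>"
  shows "(\<lambda>k. l (X k)) \<longlonglongrightarrow> l s"
  using continuous_map_limit[OF _ assms(1), of euclidean l] \<Lambda>_lin assms(2) by (simp add: comp_def)

lemma f_seminorm_continuous:
  assumes z0: "z0 \<in> U" and q: "q \<in> PF" and "e > 0"
  obtains Q r where "finite Q" "Q \<subseteq> PE" "r > 0"
    "\<And>z. z \<in> U \<Longrightarrow> z \<in> seminorm_ball Q z0 r \<Longrightarrow> q (f z - f z0) < e"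
proof -
  have "openin (subtopology (seminorm_topology PE) U)
      {z \<in> topspace (subtopology (seminorm_topology PE) U). f z \<in> {u. q (u - f z0) < e}}"
    by (rule openin_continuous_map_preimage[OF f_cont openin_seminorm_semiball[OF q \<open>e > 0\<close>]])
  moreover have "topspace (subtopology (seminorm_topology PE) U) = U"
    by (simp only: topspace_subtopology topspace_seminorm_topology Int_UNIV_left)
  ultimately have "openin (subtopology (seminorm_topology PE) U) {z \<in> U. q (f z - f z0) < e}"
    unfolding mem_Collect_eq by (simp only:)
  then obtain T where T: "openin (seminorm_topology PE) T" "{z \<in> U. q (f z - f z0) < e} = T \<inter> U"
    unfolding openin_subtopology by blast
  have "q (f z0 - f z0) < e"
    using \<open>e > 0\<close> complex_seminorm.zero[OF F.seminorm[OF q]] by simp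
  then have "z0 \<in> {z \<in> U. q (f z - f z0) < e}"
    using z0 by simp
  then have "z0 \<in> T"
    using T(2) by simp
  then obtain Q r where Q: "finite Q" "Q \<subseteq> PE" "r > 0" "seminorm_ball Q z0 r \<subseteq> T"
    using E.openin_imp_seminorm_ball[OF T(1), rule_format, OF \<open>z0 \<in> T\<close>] by blast
  show thesis
  proof (rule that[OF Q(1-3)])
    fix z
    assume "z \<in> U" "z \<in> seminorm_ball Q z0 r"
    then have "z \<in> T \<inter> U"
      using Q(4) by blast
    then have "z \<in> {z \<in> U. q (f z - f z0) < e}"
      using T(2) by simp
    then show "q (f z - f z0) < e"
      by simp
  qed
qed

definition weak_expansion :: "('b \<Rightarrow> complex) \<Rightarrow> 'a \<Rightarrow> 'a set \<Rightarrow> (nat \<Rightarrow> 'a \<Rightarrow> complex) \<Rightarrow> bool" where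
  "weak_expansion l x V c \<longleftrightarrow> openin (seminorm_topology PE) V \<and> x \<in> V \<and>
     (\<forall>n. chom_poly smE times n (c n)) \<and> (\<forall>y\<in>V. (\<lambda>n. c n (y - x)) sums l (f y))"

lemma weak_expansion_exists:
  assumes l: "l \<in> \<Lambda>" and x: "x \<in> U"
  shows "\<exists>V c. weak_expansion l x V c"
proof -
  have "canalytic smE PE times complex_seminorms U (l \<circ> f)"
    using weak l by blast
  then obtain V c where V: "openin (seminorm_topology PE) V" "x \<in> V"
    "\<forall>n. chom_poly smE times n (c n)"
    "\<forall>y\<in>V. limitin (seminorm_topology complex_seminorms)
        (\<lambda>N. \<Sum>n<N. c n (y - x)) ((l \<circ> f) y) sequentially"
    using x unfolding canalytic_def by blast
  then have "weak_expansion l x V c"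
    by (auto simp: weak_expansion_def sums_def limitin_complex_seminorms_iff)
  then show ?thesis
    by blast
qed

lemma weak_expansions_at:
  assumes "x \<in> U"
  obtains V c where "\<And>l. l \<in> \<Lambda> \<Longrightarrow> weak_expansion l x (V l) (c l)"
proof -
  obtain V where "\<forall>l\<in>\<Lambda>. \<exists>c. weak_expansion l x (V l) c"
    using bchoice[of \<Lambda> "\<lambda>l V. \<exists>c. weak_expansion l x V c"] weak_expansion_exists[OF _ assms] by blast
  then obtain c where "\<forall>l\<in>\<Lambda>. weak_expansion l x (V l) (c l)"
    by (rule bchoice[elim_format]) blast
  then show thesis
    using that by blast
qed

lemma weak_expansion_along_line:
  assumes "weak_expansion l (x + smE \<zeta>0 h) V c"
  shows "\<exists>\<delta>>0. \<forall>\<zeta>\<in>ball \<zeta>0 \<delta>. (\<lambda>n. c n h * (\<zeta> - \<zeta>0) ^ n) sums l (f (x + smE \<zeta> h))"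
proof -
  note exp = assms[unfolded weak_expansion_def]
  obtain Q \<rho> where Q: "finite Q" "Q \<subseteq> PE" "\<rho> > 0" "seminorm_ball Q (x + smE \<zeta>0 h) \<rho> \<subseteq> V"
    using E.openin_imp_seminorm_ball[OF conjunct1[OF exp], rule_format, of "x + smE \<zeta>0 h"] exp
    by blast
  obtain t where t: "t \<ge> 1" "smE (of_real (1 / t)) h \<in> seminorm_ball Q 0 \<rho>"
    using E.scale_into_seminorm_ball[OF Q(1-3)] .
  have "(\<lambda>n. c n h * (\<zeta> - \<zeta>0) ^ n) sums l (f (x + smE \<zeta> h))" if \<zeta>: "\<zeta> \<in> ball \<zeta>0 (1 / t)" for \<zeta>
  proof -
    have d: "x + smE \<zeta> h - (x + smE \<zeta>0 h) = smE (\<zeta> - \<zeta>0) h"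
      by (simp add: E.scale_diff_left)
    have "p (smE (\<zeta> - \<zeta>0) h) < \<rho>" if p: "p \<in> Q" for p
    proof -
      interpret p: complex_seminorm smE p
        using E.seminorm p Q(2) by blast
      have "p (smE (\<zeta> - \<zeta>0) h) = norm (\<zeta> - \<zeta>0) * t * (p h / t)"
        using t(1) by (simp add: p.homog)
      also have "\<dots> \<le> 1 * (p h / t)"
        using \<zeta> t(1) p.nonneg[of h]
        by (intro mult_right_mono) (auto simp: dist_norm norm_minus_commute field_simps)
      also have "p h / t = p (smE (of_real (1 / t)) h)"
        using t(1) by (simp add: p.homog norm_divide)
      also have "\<dots> < \<rho>"
        using t(2) p by (simp add: seminorm_ball_def)
      finally show ?thesis
        by simp
    qed
    then have "x + smE \<zeta> h \<in> seminorm_ball Q (x + smE \<zeta>0 h) \<rho>"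
      unfolding seminorm_ball_def mem_Collect_eq d by blast
    then have "x + smE \<zeta> h \<in> V"
      using Q(4) by blast
    then have "(\<lambda>n. c n (x + smE \<zeta> h - (x + smE \<zeta>0 h))) sums l (f (x + smE \<zeta> h))"
      using exp by blast
    then have "(\<lambda>n. c n (smE (\<zeta> - \<zeta>0) h)) sums l (f (x + smE \<zeta> h))"
      unfolding d .
    moreover have "c n (smE (\<zeta> - \<zeta>0) h) = c n h * (\<zeta> - \<zeta>0) ^ n" for n
      using chom_poly_scale[OF _ complex_seminorms.cvector_space_axioms, of smE n "c n"] exp
      by (simp add: mult.commute)
    ultimately show ?thesis
      by simp
  qed
  moreover have "1 / t > 0"
    using t(1) by simp
  ultimately show ?thesis
    by blast
qed

end

section \<open>Cauchy averages at a point\<close>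

locale weakly_analytic_at = weakly_analytic +
  fixes x :: 'a and Q0 :: "('a \<Rightarrow> real) set" and r :: real
    and V :: "('b \<Rightarrow> complex) \<Rightarrow> 'a set" and c :: "('b \<Rightarrow> complex) \<Rightarrow> nat \<Rightarrow> 'a \<Rightarrow> complex"
  assumes Q0: "finite Q0" "Q0 \<subseteq> PE" "r > 0" "seminorm_ball Q0 x r \<subseteq> U"
    and expansion: "\<And>l. l \<in> \<Lambda> \<Longrightarrow> weak_expansion l x (V l) (c l)"
begin

text \<open>The radius \<open>r/3\<close> keeps \<open>x + \<zeta> h\<close> in \<open>U\<close> for \<open>|\<zeta>| < 3\<close>; evaluating the weak series at
  \<open>\<zeta> = 2\<close> then makes it absolutely summable on the unit circle.\<close>
abbreviation dir_ball :: "'a set" where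
  "dir_ball \<equiv> seminorm_ball Q0 0 (r / 3)"

lemma line_in_U:
  assumes h: "h \<in> dir_ball" and "norm \<zeta> < 3"
  shows "x + smE \<zeta> h \<in> U"
proof -
  have "p (x + smE \<zeta> h - x) < r" if p: "p \<in> Q0" for p
  proof -
    interpret p: complex_seminorm smE p
      using E.seminorm p Q0(2) by blast
    have "p (x + smE \<zeta> h - x) = norm \<zeta> * p h"
      by (simp add: p.homog)
    also have "\<dots> \<le> 3 * p h"
      using \<open>norm \<zeta> < 3\<close> p.nonneg[of h] by (intro mult_right_mono) auto
    also have "\<dots> < r"
    proof -
      have "p (h - 0) < r / 3"
        using h p unfolding seminorm_ball_def by blast
      then show ?thesis
        by simp
    qed
    finally show ?thesis .
  qed
  then show ?thesis
    using Q0(4) by (auto simp: seminorm_ball_def)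
qed

lemma weak_coeff_scale: "l \<in> \<Lambda> \<Longrightarrow> c l n (smE a y) = a ^ n * c l n y"
  using chom_poly_scale[OF _ complex_seminorms.cvector_space_axioms, of smE n "c l n"] expansion
  by (simp add: weak_expansion_def)

text \<open>The weak expansion at \<open>x\<close> is only known near \<open>x\<close>; holomorphy of \<open>\<lambda> \<circ> f\<close> along the line and
  uniqueness of power series coefficients extend it to the whole disc \<open>|\<zeta>| < 3\<close>.\<close>
lemma weak_series_on_line:
  assumes l: "l \<in> \<Lambda>" and h: "h \<in> dir_ball" and "norm \<zeta> < 3"
  shows "(\<lambda>n. c l n h * \<zeta> ^ n) sums l (f (x + smE \<zeta> h))"
proof -
  define g where "g = (\<lambda>\<zeta>. l (f (x + smE \<zeta> h)))"
  have "g holomorphic_on ball 0 3"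
  proof (rule holomorphic_on_if_local_power_series)
    fix \<zeta>0 :: complex
    assume "\<zeta>0 \<in> ball 0 3"
    then have "norm \<zeta>0 < 3"
      by simp
    then obtain V' c' where "weak_expansion l (x + smE \<zeta>0 h) V' c'"
      using weak_expansion_exists[OF l line_in_U[OF h \<open>norm \<zeta>0 < 3\<close>]] by blast
    then obtain \<delta> where "\<delta> > 0"
      "\<forall>z\<in>ball \<zeta>0 \<delta>. (\<lambda>n. c' n h * (z - \<zeta>0) ^ n) sums l (f (x + smE z h))"
      using weak_expansion_along_line by blast
    then show "\<exists>\<delta>>0. \<exists>a. \<forall>z\<in>ball \<zeta>0 \<delta>. (\<lambda>n. a n * (z - \<zeta>0) ^ n) sums g z"
      unfolding g_def by (intro exI[of _ \<delta>] conjI exI[of _ "\<lambda>n. c' n h"])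
  qed simp
  then have taylor: "(\<lambda>n. (deriv ^^ n) g 0 / fact n * w ^ n) sums g w" if "norm w < 3" for w
    using holomorphic_power_series[of g 0 3 w] that by simp
  have "weak_expansion l (x + smE 0 h) (V l) (c l)"
    using expansion[OF l] by simp
  from weak_expansion_along_line[OF this] obtain \<delta> where
    \<delta>: "\<delta> > 0" "\<forall>w\<in>ball 0 \<delta>. (\<lambda>n. c l n h * (w - 0) ^ n) sums g w"
    unfolding g_def by blast
  have coeff: "c l n h = (deriv ^^ n) g 0 / fact n" for n
  proof (rule power_series_coeffs_unique[of "min \<delta> 3"])
    fix w :: complex
    assume "norm w < min \<delta> 3"
    then show "(\<lambda>n. c l n h * w ^ n) sums g w" "(\<lambda>n. (deriv ^^ n) g 0 / fact n * w ^ n) sums g w"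
      using \<delta>(2) taylor[of w] by auto
  qed (use \<delta> in simp)
  show ?thesis
    using taylor[OF \<open>norm \<zeta> < 3\<close>] unfolding coeff g_def .
qed

lemma weak_coeff_summable: "l \<in> \<Lambda> \<Longrightarrow> h \<in> dir_ball \<Longrightarrow> summable (\<lambda>n. norm (c l n h))"
  using powser_insidea[of "\<lambda>n. c l n h" 2 1] weak_series_on_line[of l h 2] by (auto simp: sums_iff)

definition circle_integrand :: "nat \<Rightarrow> complex \<Rightarrow> 'a \<Rightarrow> 'b" where
  "circle_integrand n \<zeta> h = smF (cnj \<zeta> ^ n) (f (x + smE \<zeta> h))"

definition cauchy_avg :: "nat \<Rightarrow> 'a \<Rightarrow> nat \<Rightarrow> 'b" where
  "cauchy_avg n h k = smF (1 / of_nat (2 ^ k)) (\<Sum>j<2 ^ k. circle_integrand n (unit_root k j) h)"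

lemma functional_cauchy_avg_sums:
  assumes l: "l \<in> \<Lambda>" and h: "h \<in> dir_ball"
  shows "(\<lambda>i. c l i h * root_avg (2 ^ k) n i) sums l (cauchy_avg n h k)"
proof -
  define m :: nat where "m = 2 ^ k"
  have "(\<lambda>i. c l i h * unit_root k j ^ i) sums l (f (x + smE (unit_root k j) h))" for j
    using weak_series_on_line[OF l h] by simp
  then have "(\<lambda>i. \<Sum>j<m. (1 / of_nat m) * (cnj (unit_root k j) ^ n * (c l i h * unit_root k j ^ i))) sums
      (\<Sum>j<m. (1 / of_nat m) * (cnj (unit_root k j) ^ n * l (f (x + smE (unit_root k j) h))))"
    by (intro sums_sum sums_mult)
  moreover have "(\<Sum>j<m. (1 / of_nat m) * (cnj (unit_root k j) ^ n * (c l i h * unit_root k j ^ i))) =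
      c l i h * root_avg m n i" for i
  proof -
    have "unit_root k j = cis (2 * pi * real j / real m)" for j
      by (simp add: unit_root_def m_def)
    then show ?thesis
      by (simp add: root_avg_def sum_distrib_left mult_ac)
  qed
  moreover have "(\<Sum>j<m. (1 / of_nat m) * (cnj (unit_root k j) ^ n * l (f (x + smE (unit_root k j) h)))) =
      l (cauchy_avg n h k)"
    by (simp add: cauchy_avg_def circle_integrand_def functional_scale[OF l] functional_sum[OF l]
        sum_distrib_left m_def)
  ultimately show ?thesis
    by (simp add: m_def)
qed

text \<open>By orthogonality of the roots of unity, applying \<open>\<lambda>\<close> to the average picks out the coefficient
  of \<open>\<zeta>\<^sup>n\<close> up to aliasing from the coefficients of index at least \<open>2\<^sup>k\<close>.\<close>
lemma functional_cauchy_avg_error: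
  assumes l: "l \<in> \<Lambda>" and h: "h \<in> dir_ball" and "n < 2 ^ k"
  shows "norm (l (cauchy_avg n h k) - c l n h) \<le> 2 * (\<Sum>i. norm (c l (i + 2 ^ k) h))"
proof -
  define m :: nat where "m = 2 ^ k"
  define a where "a = (\<lambda>i. c l i h)"
  have m: "m > 0" "n < m"
    using assms(3) by (auto simp: m_def)
  have suma: "summable (\<lambda>i. norm (a i))"
    using weak_coeff_summable[OF l h] by (simp add: a_def)
  have "(\<lambda>i. a i * root_avg m n i) sums l (cauchy_avg n h k)"
    using functional_cauchy_avg_sums[OF l h] by (simp add: a_def m_def)
  moreover have "(\<lambda>i. if i = n then a i else 0) sums a n"
    by (rule sums_single)
  ultimately have "(\<lambda>i. a i * root_avg m n i - (if i = n then a i else 0)) sums (l (cauchy_avg n h k) - a n)"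
    by (rule sums_diff)
  then have diff: "l (cauchy_avg n h k) - a n = (\<Sum>i. a i * root_avg m n i - (if i = n then a i else 0))"
    by (rule sums_unique)
  define b where "b = (\<lambda>i. if i < m then 0 else 2 * norm (a i))"
  have bound: "norm (a i * root_avg m n i - (if i = n then a i else 0)) \<le> b i" for i
  proof (cases "i < m")
    case True
    then show ?thesis
      using root_avg_same[OF m(1)] root_avg_other[OF True m(2)] by (auto simp: b_def)
  next
    case False
    have "norm (a i * root_avg m n i) \<le> norm (a i) * 1"
      unfolding norm_mult by (intro mult_left_mono norm_root_avg_le m(1)) auto
    then have "norm (a i * root_avg m n i) \<le> 2 * norm (a i)"
      using norm_ge_zero[of "a i"] by linarith
    then show ?thesis
      using False m by (simp add: b_def)
  qed
  have "summable b"
    by (rule summable_comparison_test'[of "\<lambda>i. 2 * norm (a i)" 0])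
       (use suma in \<open>auto simp: b_def summable_mult\<close>)
  have "norm (l (cauchy_avg n h k) - a n) \<le> suminf b"
    unfolding diff by (rule norm_suminf_le[OF bound \<open>summable b\<close>])
  also have "suminf b = (\<Sum>i. 2 * norm (a (i + m)))"
    using suminf_split_initial_segment[OF \<open>summable b\<close>, of m] by (simp add: b_def)
  also have "\<dots> = 2 * (\<Sum>i. norm (a (i + m)))"
    by (rule suminf_mult) (rule summable_ignore_initial_segment[OF suma])
  finally show ?thesis
    by (simp add: a_def m_def)
qed

lemma functional_cauchy_avg_tendsto:
  assumes l: "l \<in> \<Lambda>" and h: "h \<in> dir_ball"
  shows "(\<lambda>k. l (cauchy_avg n h k)) \<longlonglongrightarrow> c l n h"
proof -
  have "(\<lambda>m. \<Sum>i. norm (c l (i + m) h)) \<longlonglongrightarrow> 0"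
    by (rule suminf_exist_split2[OF weak_coeff_summable[OF l h]])
  from LIMSEQ_subseq_LIMSEQ[OF this, of "\<lambda>k. 2 ^ k"]
  have "(\<lambda>k. \<Sum>i. norm (c l (i + 2 ^ k) h)) \<longlonglongrightarrow> 0"
    by (simp add: strict_mono_def comp_def)
  then have "(\<lambda>k. 2 * (\<Sum>i. norm (c l (i + 2 ^ k) h))) \<longlonglongrightarrow> 0"
    by (rule tendsto_mult_right_zero)
  moreover have "eventually (\<lambda>k. norm (l (cauchy_avg n h k) - c l n h) \<le>
      2 * (\<Sum>i. norm (c l (i + 2 ^ k) h))) sequentially"
  proof (rule eventually_sequentiallyI)
    fix k
    assume "n \<le> k"
    then have "n < 2 ^ k"
      using less_exp[of k] by linarith
    then show "norm (l (cauchy_avg n h k) - c l n h) \<le> 2 * (\<Sum>i. norm (c l (i + 2 ^ k) h))"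
      by (rule functional_cauchy_avg_error[OF l h])
  qed
  ultimately have "(\<lambda>k. l (cauchy_avg n h k) - c l n h) \<longlonglongrightarrow> 0"
    by (rule Lim_null_comparison[rotated])
  then show ?thesis
    by (rule LIM_zero_cancel)
qed

lemma circle_integrand_diff_le:
  assumes q: "q \<in> PF" and "norm \<zeta> = 1" "norm \<zeta>0 = 1"
  shows "q (circle_integrand n \<zeta> h - circle_integrand n \<zeta>0 h0) \<le>
    q (f (x + smE \<zeta> h) - f (x + smE \<zeta>0 h0)) + real n * norm (\<zeta> - \<zeta>0) * q (f (x + smE \<zeta>0 h0))"
proof -
  interpret q: complex_seminorm smF q
    using F.seminorm[OF q] .
  have "norm (cnj \<zeta> ^ n - cnj \<zeta>0 ^ n) \<le> real n * norm (cnj \<zeta> - cnj \<zeta>0)"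
    using assms by (intro norm_power_diff) auto
  also have "norm (cnj \<zeta> - cnj \<zeta>0) = norm (\<zeta> - \<zeta>0)"
    by (metis complex_cnj_diff complex_mod_cnj)
  finally have "norm (cnj \<zeta> ^ n - cnj \<zeta>0 ^ n) * q (f (x + smE \<zeta>0 h0)) \<le>
      real n * norm (\<zeta> - \<zeta>0) * q (f (x + smE \<zeta>0 h0))"
    by (intro mult_right_mono q.nonneg)
  moreover have "norm (cnj \<zeta> ^ n) = 1"
    using assms by (simp add: norm_power)
  note scale = q.scale_diff_le[of "cnj \<zeta> ^ n" "f (x + smE \<zeta> h)" "cnj \<zeta>0 ^ n" "f (x + smE \<zeta>0 h0)",
      unfolded this mult_1]
  ultimately show ?thesis
    unfolding circle_integrand_def by linarith
qed

lemma seminorm_line_diff_le: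
  assumes p: "p \<in> PE" and "norm \<zeta> = 1"
  shows "p (x + smE \<zeta> h - (x + smE \<zeta>0 h0)) \<le> p (h - h0) + norm (\<zeta> - \<zeta>0) * p h0"
proof -
  interpret p: complex_seminorm smE p
    using E.seminorm[OF p] .
  have "x + smE \<zeta> h - (x + smE \<zeta>0 h0) = smE \<zeta> (h - h0) + smE (\<zeta> - \<zeta>0) h0"
    by (simp add: E.scale_diff_right E.scale_diff_left)
  then show ?thesis
    using p.triangle[of "smE \<zeta> (h - h0)" "smE (\<zeta> - \<zeta>0) h0"] assms(2) by (simp add: p.homog)
qed

lemma line_point_continuous:
  assumes Q: "finite Q" "Q \<subseteq> PE" and "r1 > 0"
  obtains \<rho> where "\<rho> > 0" "\<And>\<zeta> h. norm \<zeta> = 1 \<Longrightarrow> norm (\<zeta> - \<zeta>0) < \<rho> \<Longrightarrow> h \<in> seminorm_ball Q h0 \<rho> \<Longrightarrow>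
    x + smE \<zeta> h \<in> seminorm_ball Q (x + smE \<zeta>0 h0) r1"
proof -
  define C where "C = 1 + (\<Sum>p\<in>Q. p h0)"
  have nonneg: "p \<in> Q \<Longrightarrow> p v \<ge> 0" for p v
    using Q(2) E.seminorm complex_seminorm.nonneg by blast
  have C: "C \<ge> 1"
    using nonneg by (simp add: C_def sum_nonneg)
  have pC: "p h0 \<le> C" if "p \<in> Q" for p
    using member_le_sum[of p Q "\<lambda>p. p h0"] nonneg Q(1) that by (simp add: C_def)
  show thesis
  proof (rule that[of "r1 / (2 * C)"])
    show "r1 / (2 * C) > 0"
      using C \<open>r1 > 0\<close> by simp
    fix \<zeta> h
    assume \<zeta>: "norm \<zeta> = 1" "norm (\<zeta> - \<zeta>0) < r1 / (2 * C)" and h: "h \<in> seminorm_ball Q h0 (r1 / (2 * C))"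
    have "p (x + smE \<zeta> h - (x + smE \<zeta>0 h0)) < r1" if p: "p \<in> Q" for p
    proof -
      have "p (x + smE \<zeta> h - (x + smE \<zeta>0 h0)) \<le> p (h - h0) + norm (\<zeta> - \<zeta>0) * p h0"
        using seminorm_line_diff_le p Q(2) \<zeta>(1) by blast
      also have "\<dots> < r1 / (2 * C) + r1 / (2 * C) * C"
        using h p \<zeta>(2) pC[OF p] nonneg[OF p, of h0] \<open>r1 > 0\<close> C
        by (intro add_less_le_mono mult_mono) (auto simp: seminorm_ball_def)
      also have "\<dots> \<le> r1"
      proof -
        have "r1 / (2 * C) * C = r1 / 2"
          using C by simp
        moreover have "r1 / (2 * C) \<le> r1 / 2"
          using C \<open>r1 > 0\<close> by (intro divide_left_mono) auto
        ultimately show ?thesis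
          by linarith
      qed
      finally show ?thesis .
    qed
    then show "x + smE \<zeta> h \<in> seminorm_ball Q (x + smE \<zeta>0 h0) r1"
      unfolding seminorm_ball_def by blast
  qed
qed

lemma circle_integrand_continuous_at:
  assumes h0: "h0 \<in> dir_ball" and q: "q \<in> PF" and e: "e > 0" and \<zeta>0: "norm \<zeta>0 = 1"
  shows "\<exists>Q \<rho>. finite Q \<and> Q \<subseteq> PE \<and> \<rho> > 0 \<and>
    (\<forall>\<zeta> h. norm \<zeta> = 1 \<longrightarrow> norm (\<zeta> - \<zeta>0) < \<rho> \<longrightarrow> h \<in> dir_ball \<longrightarrow> h \<in> seminorm_ball Q h0 \<rho> \<longrightarrow>
      q (circle_integrand n \<zeta> h - circle_integrand n \<zeta>0 h0) < e)"
proof -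
  define w0 where "w0 = x + smE \<zeta>0 h0"
  have "w0 \<in> U"
    unfolding w0_def using line_in_U[OF h0] \<zeta>0 by simp
  then obtain Q r1 where Q: "finite Q" "Q \<subseteq> PE" "r1 > 0"
    "\<And>z. z \<in> U \<Longrightarrow> z \<in> seminorm_ball Q w0 r1 \<Longrightarrow> q (f z - f w0) < e / 2"
    using f_seminorm_continuous[OF _ q, of w0 "e / 2"] e by auto
  obtain \<rho>1 where \<rho>1: "\<rho>1 > 0" "\<And>\<zeta> h. norm \<zeta> = 1 \<Longrightarrow> norm (\<zeta> - \<zeta>0) < \<rho>1 \<Longrightarrow>
      h \<in> seminorm_ball Q h0 \<rho>1 \<Longrightarrow> x + smE \<zeta> h \<in> seminorm_ball Q w0 r1"
    using line_point_continuous[OF Q(1-3)] unfolding w0_def by blast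
  define B where "B = q (f w0)"
  have B: "B \<ge> 0"
    unfolding B_def by (rule complex_seminorm.nonneg[OF F.seminorm[OF q]])
  define \<rho> where "\<rho> = min \<rho>1 (e / (2 * (real n + 1) * (B + 1)))"
  have \<rho>: "\<rho> > 0"
    using \<rho>1(1) e B by (simp add: \<rho>_def)
  have "\<rho> \<le> e / (2 * (real n + 1) * (B + 1))" "0 < 2 * (real n + 1) * (B + 1)"
    using B by (simp_all add: \<rho>_def)
  then have \<rho>_le: "\<rho> * (2 * (real n + 1) * (B + 1)) \<le> e"
    by (simp only: pos_le_divide_eq)
  show ?thesis
  proof (intro exI[of _ Q] exI[of _ \<rho>] conjI allI impI)
    fix \<zeta> h
    assume \<zeta>: "norm \<zeta> = 1" "norm (\<zeta> - \<zeta>0) < \<rho>" and h: "h \<in> dir_ball" "h \<in> seminorm_ball Q h0 \<rho>"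
    have "norm (\<zeta> - \<zeta>0) < \<rho>1" "h \<in> seminorm_ball Q h0 \<rho>1"
      using \<zeta>(2) h(2) by (auto simp: \<rho>_def seminorm_ball_def)
    then have "q (f (x + smE \<zeta> h) - f w0) < e / 2"
      using Q(4) \<rho>1(2) line_in_U[OF h(1)] \<zeta>(1) by simp
    moreover have "real n * norm (\<zeta> - \<zeta>0) * B \<le> (real n + 1) * \<rho> * (B + 1)"
      using \<zeta>(2) B \<rho> by (intro mult_mono) auto
    moreover have "(real n + 1) * \<rho> * (B + 1) \<le> e / 2"
      using \<rho>_le by (simp add: field_simps)
    ultimately show "q (circle_integrand n \<zeta> h - circle_integrand n \<zeta>0 h0) < e"
      using circle_integrand_diff_le[OF q \<zeta>(1) \<zeta>0, of n h h0]
      unfolding w0_def B_def by linarith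
  qed (use Q \<rho> in auto)
qed

lemma circle_integrand_uniformly_continuous:
  assumes h0: "h0 \<in> dir_ball" and q: "q \<in> PF" and e: "e > 0"
  obtains Q \<rho> \<delta> where "finite Q" "Q \<subseteq> PE" "\<rho> > 0" "\<delta> > 0"
    "\<And>\<zeta> \<zeta>' h. norm \<zeta> = 1 \<Longrightarrow> norm \<zeta>' = 1 \<Longrightarrow> norm (\<zeta> - \<zeta>') < \<delta> \<Longrightarrow> h \<in> dir_ball \<Longrightarrow>
      h \<in> seminorm_ball Q h0 \<rho> \<Longrightarrow> q (circle_integrand n \<zeta> h - circle_integrand n \<zeta>' h0) < e"
proof -
  interpret q: complex_seminorm smF q
    using F.seminorm[OF q] .
  define good where "good \<zeta>0 Q \<rho> \<longleftrightarrow> finite Q \<and> Q \<subseteq> PE \<and> \<rho> > 0 \<and>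
    (\<forall>\<zeta> h. norm \<zeta> = 1 \<longrightarrow> norm (\<zeta> - \<zeta>0) < \<rho> \<longrightarrow> h \<in> dir_ball \<longrightarrow> h \<in> seminorm_ball Q h0 \<rho> \<longrightarrow>
      q (circle_integrand n \<zeta> h - circle_integrand n \<zeta>0 h0) < e / 2)" for \<zeta>0 Q \<rho>
  have "\<exists>Q \<rho>. good \<zeta>0 Q \<rho>" if "\<zeta>0 \<in> sphere 0 1" for \<zeta>0
  proof -
    have "norm \<zeta>0 = 1"
      using that by simp
    then show ?thesis
      unfolding good_def by (rule circle_integrand_continuous_at[OF h0 q half_gt_zero[OF e]])
  qed
  then obtain Q1 \<rho>1 where good: "\<And>\<zeta>0. \<zeta>0 \<in> sphere 0 1 \<Longrightarrow> good \<zeta>0 (Q1 \<zeta>0) (\<rho>1 \<zeta>0)"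
    by metis
  have cover: "sphere (0::complex) 1 \<subseteq> (\<Union>c\<in>sphere 0 1. ball c (\<rho>1 c / 2))"
    using good by (force simp: good_def)
  obtain K where K: "K \<subseteq> sphere 0 1" "finite K" "sphere 0 1 \<subseteq> (\<Union>c\<in>K. ball c (\<rho>1 c / 2))"
    by (rule compactE_image[OF compact_sphere _ cover]) auto
  have "K \<noteq> {}"
    using K(3) by (metis UN_empty empty_iff mem_sphere_0 norm_one subset_empty)
  define \<rho> where "\<rho> = Min (\<rho>1 ` K)"
  define Q where "Q = \<Union> (Q1 ` K)"
  have good_K: "c \<in> K \<Longrightarrow> good c (Q1 c) (\<rho>1 c)" for c
    using good K(1) by blast
  have \<rho>: "\<rho> > 0" and \<rho>_le: "c \<in> K \<Longrightarrow> \<rho> \<le> \<rho>1 c" for c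
    using K(2) \<open>K \<noteq> {}\<close> good_K by (auto simp: \<rho>_def good_def)
  show thesis
  proof (rule that[of Q \<rho> "\<rho> / 2"])
    show "finite Q" "Q \<subseteq> PE"
      using K(2) good_K by (auto simp: Q_def good_def)
    show "\<rho> > 0" "\<rho> / 2 > 0"
      using \<rho> by simp_all
    fix \<zeta> \<zeta>' :: complex and h
    assume \<zeta>: "norm \<zeta> = 1" "norm \<zeta>' = 1" "norm (\<zeta> - \<zeta>') < \<rho> / 2"
      and h: "h \<in> dir_ball" "h \<in> seminorm_ball Q h0 \<rho>"
    obtain c where c: "c \<in> K" "norm (\<zeta> - c) < \<rho>1 c / 2"
      using K(3) \<zeta>(1) by (force simp: dist_norm norm_minus_commute)
    have "norm (\<zeta>' - c) \<le> norm (\<zeta>' - \<zeta>) + norm (\<zeta> - c)"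
      using norm_triangle_ineq[of "\<zeta>' - \<zeta>" "\<zeta> - c"] by simp
    then have "norm (\<zeta>' - c) < \<rho>1 c"
      using \<zeta>(3) \<rho>_le[OF c(1)] c(2) by (simp add: norm_minus_commute)
    moreover have "norm (\<zeta> - c) < \<rho>1 c"
      using c(2) good_K[OF c(1)] by (simp add: good_def)
    moreover have "h \<in> seminorm_ball (Q1 c) h0 (\<rho>1 c)" "h0 \<in> seminorm_ball (Q1 c) h0 (\<rho>1 c)"
      using h(2) \<rho>_le[OF c(1)] c(1) good_K[OF c(1)] E.centre_in_seminorm_ball
      by (fastforce simp: seminorm_ball_def Q_def good_def)+
    ultimately have "q (circle_integrand n \<zeta> h - circle_integrand n c h0) < e / 2"
      "q (circle_integrand n \<zeta>' h0 - circle_integrand n c h0) < e / 2"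
      using good_K[OF c(1)] \<zeta> h(1) h0 unfolding good_def by blast+
    then show "q (circle_integrand n \<zeta> h - circle_integrand n \<zeta>' h0) < e"
      using q.triangle_diff[of "circle_integrand n \<zeta> h" "circle_integrand n \<zeta>' h0" "circle_integrand n c h0"]
        q.commute[of "circle_integrand n c h0" "circle_integrand n \<zeta>' h0"] by linarith
  qed
qed

lemma cauchy_avg_refine:
  assumes "k \<le> k'"
  shows "cauchy_avg n h k =
    smF (1 / of_nat (2 ^ k')) (\<Sum>j<2 ^ k'. circle_integrand n (unit_root k (j div 2 ^ (k' - k))) h)"
proof -
  define d :: nat where "d = 2 ^ (k' - k)"
  define m :: nat where "m = 2 ^ k"
  have md: "2 ^ k' = m * d"
    using assms by (simp add: m_def d_def power_add[symmetric])
  have "(\<Sum>j<2 ^ k'. circle_integrand n (unit_root k (j div d)) h) =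
      (\<Sum>a<m. \<Sum>i<d. circle_integrand n (unit_root k a) h)"
    unfolding md by (rule sum_lessThan_mult_div)
  also have "\<dots> = smF (of_nat d) (\<Sum>a<m. circle_integrand n (unit_root k a) h)"
    by (simp add: F.scale_of_nat F.scale_sum_right)
  finally have "smF (1 / of_nat (2 ^ k')) (\<Sum>j<2 ^ k'. circle_integrand n (unit_root k (j div d)) h) =
      smF (1 / of_nat (2 ^ k') * of_nat d) (\<Sum>a<m. circle_integrand n (unit_root k a) h)"
    by (simp only: F.scale_mult)
  also have "1 / of_nat (2 ^ k') * of_nat d = (1 / of_nat m :: complex)"
    unfolding md by (simp add: d_def)
  finally show ?thesis
    by (simp add: cauchy_avg_def m_def d_def)
qed

text \<open>Refining from the \<open>2\<^sup>k\<close>-th to the \<open>2\<^sup>k\<^sup>'\<close>-th roots of unity moves each sample point by less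
  than \<open>2\<pi>/2\<^sup>k\<close>, so uniform continuity of the integrand makes the averages Cauchy.\<close>
lemma cauchy_avg_refine_close:
  assumes h: "h \<in> dir_ball" and q: "q \<in> PF" and e: "e > 0"
  obtains N where "\<And>k k'. N \<le> k \<Longrightarrow> k \<le> k' \<Longrightarrow> q (cauchy_avg n h k' - cauchy_avg n h k) \<le> e"
proof -
  interpret q: complex_seminorm smF q
    using F.seminorm[OF q] .
  obtain Q \<rho> \<delta> where T: "finite Q" "Q \<subseteq> PE" "\<rho> > 0" "\<delta> > 0"
    "\<And>\<zeta> \<zeta>' h'. norm \<zeta> = 1 \<Longrightarrow> norm \<zeta>' = 1 \<Longrightarrow> norm (\<zeta> - \<zeta>') < \<delta> \<Longrightarrow> h' \<in> dir_ball \<Longrightarrow>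
      h' \<in> seminorm_ball Q h \<rho> \<Longrightarrow> q (circle_integrand n \<zeta> h' - circle_integrand n \<zeta>' h) < e"
    using circle_integrand_uniformly_continuous[OF h q e] by blast
  have h_in: "h \<in> seminorm_ball Q h \<rho>"
    by (rule E.centre_in_seminorm_ball[OF T(3,2)])
  obtain N where N: "2 * pi / \<delta> < 2 ^ N"
    using real_arch_pow[of 2 "2 * pi / \<delta>"] by auto
  show thesis
  proof (rule that[of N])
    fix k k'
    assume k: "N \<le> k" "k \<le> k'"
    define d :: nat where "d = 2 ^ (k' - k)"
    have "cauchy_avg n h k' - cauchy_avg n h k = smF (1 / of_nat (2 ^ k'))
        (\<Sum>j<2 ^ k'. circle_integrand n (unit_root k' j) h - circle_integrand n (unit_root k (j div d)) h)"
      unfolding cauchy_avg_def[of n h k'] cauchy_avg_refine[OF k(2)] d_def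
      by (simp add: F.scale_diff_right sum_subtractf)
    also have "q \<dots> \<le> e"
    proof (rule q.average_le)
      fix j
      have "2 * pi / 2 ^ k \<le> 2 * pi / 2 ^ N"
        using k(1) pi_gt_zero by (intro divide_left_mono power_increasing) auto
      also have "\<dots> < \<delta>"
        using N T(4) by (simp add: field_simps)
      finally have "norm (unit_root k' j - unit_root k (j div d)) < \<delta>"
        using dist_unit_root_refine[OF k(2), of j] unfolding d_def by linarith
      then show "q (circle_integrand n (unit_root k' j) h - circle_integrand n (unit_root k (j div d)) h) \<le> e"
        using T(5)[of "unit_root k' j" "unit_root k (j div d)" h] h h_in by simp
    qed simp
    finally show "q (cauchy_avg n h k' - cauchy_avg n h k) \<le> e" .
  qed
qed

lemma cauchy_avg_Cauchy:
  assumes h: "h \<in> dir_ball"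
  shows "seminorm_Cauchy PF (cauchy_avg n h)"
  unfolding seminorm_Cauchy_def
proof (intro ballI allI impI)
  fix q and e :: real
  assume q: "q \<in> PF" and e: "e > 0"
  obtain N where N: "\<And>k k'. N \<le> k \<Longrightarrow> k \<le> k' \<Longrightarrow> q (cauchy_avg n h k' - cauchy_avg n h k) \<le> e / 2"
    using cauchy_avg_refine_close[OF h q half_gt_zero[OF e]] by blast
  show "\<exists>N. \<forall>m\<ge>N. \<forall>m'\<ge>N. q (cauchy_avg n h m - cauchy_avg n h m') < e"
  proof (intro exI[of _ N] allI impI)
    fix m m'
    assume "m \<ge> N" "m' \<ge> N"
    then have "q (cauchy_avg n h m - cauchy_avg n h m') \<le> e / 2"
      using N[of m' m] N[of m m'] complex_seminorm.commute[OF F.seminorm[OF q], of "cauchy_avg n h m"]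
      by (cases "m' \<le> m") auto
    then show "q (cauchy_avg n h m - cauchy_avg n h m') < e"
      using e by simp
  qed
qed

definition cauchy_limit :: "nat \<Rightarrow> 'a \<Rightarrow> 'b" where
  "cauchy_limit n h = (SOME u. limitin (seminorm_topology PF) (cauchy_avg n h) u sequentially)"

lemma cauchy_avg_limitin:
  assumes "h \<in> dir_ball"
  shows "limitin (seminorm_topology PF) (cauchy_avg n h) (cauchy_limit n h) sequentially"
proof -
  have "\<exists>u. limitin (seminorm_topology PF) (cauchy_avg n h) u sequentially"
    using Fcomplete cauchy_avg_Cauchy[OF assms] unfolding seq_complete_lcs_def by blast
  then show ?thesis
    unfolding cauchy_limit_def by (rule someI_ex)
qed

lemma functional_cauchy_limit:
  assumes "h \<in> dir_ball" "l \<in> \<Lambda>"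
  shows "l (cauchy_limit n h) = c l n h"
  by (rule LIMSEQ_unique[OF functional_tendsto[OF cauchy_avg_limitin[OF assms(1)] assms(2)]
        functional_cauchy_avg_tendsto[OF assms(2,1)]])

text \<open>The \<open>n\<close>-th Taylor term, on all of \<open>E\<close>: rescaling into \<open>dir_ball\<close> shows that some vector has
  the prescribed images under \<open>\<Lambda>\<close>, and by separation it is unique.\<close>
definition taylor_term :: "nat \<Rightarrow> 'a \<Rightarrow> 'b" where
  "taylor_term n y = (SOME u. \<forall>l\<in>\<Lambda>. l u = c l n y)"

lemma functional_taylor_term: "l \<in> \<Lambda> \<Longrightarrow> l (taylor_term n y) = c l n y"
proof -
  assume "l \<in> \<Lambda>"
  obtain t where t: "t \<ge> 1" "smE (of_real (1 / t)) y \<in> dir_ball"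
    using E.scale_into_seminorm_ball[OF Q0(1,2), of "r / 3"] Q0(3) by auto
  define h where "h = smE (of_real (1 / t)) y"
  have "l (smF (of_real t ^ n) (cauchy_limit n h)) = c l n y" if l: "l \<in> \<Lambda>" for l
  proof -
    have "l (smF (of_real t ^ n) (cauchy_limit n h)) = of_real t ^ n * c l n h"
      using t(2) by (simp add: functional_scale[OF l] functional_cauchy_limit[OF _ l] h_def)
    also have "\<dots> = of_real t ^ n * (of_real (1 / t) ^ n * c l n y)"
      by (simp add: h_def weak_coeff_scale[OF l])
    also have "\<dots> = c l n y"
      using t(1) by (simp add: power_mult_distrib[symmetric] field_simps)
    finally show ?thesis .
  qed
  then have "\<forall>l\<in>\<Lambda>. l (smF (of_real t ^ n) (cauchy_limit n h)) = c l n y"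
    by blast
  then have "\<forall>l\<in>\<Lambda>. l (taylor_term n y) = c l n y"
    unfolding taylor_term_def by (rule someI)
  with \<open>l \<in> \<Lambda>\<close> show ?thesis
    by blast
qed

lemma taylor_term_eq_cauchy_limit: "h \<in> dir_ball \<Longrightarrow> taylor_term n h = cauchy_limit n h"
  by (rule functionals_eqI) (simp add: functional_taylor_term functional_cauchy_limit)

lemma taylor_term_scale: "taylor_term n (smE a y) = smF (a ^ n) (taylor_term n y)"
  by (rule functionals_eqI) (simp add: functional_taylor_term functional_scale weak_coeff_scale)

lemma cauchy_avg_le:
  assumes q: "q \<in> PF" and bound: "\<And>\<zeta>. norm \<zeta> = 1 \<Longrightarrow> q (f (x + smE \<zeta> h)) \<le> M"
  shows "q (cauchy_avg n h k) \<le> M"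
  unfolding cauchy_avg_def
proof (rule complex_seminorm.average_le[OF F.seminorm[OF q]])
  fix j
  show "q (circle_integrand n (unit_root k j) h) \<le> M"
    using bound[of "unit_root k j"] complex_seminorm.homog[OF F.seminorm[OF q]]
    by (simp add: circle_integrand_def norm_power)
qed simp

lemma cauchy_avg_diff_le:
  assumes q: "q \<in> PF"
    and bound: "\<And>\<zeta>. norm \<zeta> = 1 \<Longrightarrow> q (f (x + smE \<zeta> h) - f (x + smE \<zeta> h0)) \<le> M"
  shows "q (cauchy_avg n h k - cauchy_avg n h0 k) \<le> M"
proof -
  have "cauchy_avg n h k - cauchy_avg n h0 k = smF (1 / of_nat (2 ^ k))
      (\<Sum>j<2 ^ k. smF (cnj (unit_root k j) ^ n) (f (x + smE (unit_root k j) h) - f (x + smE (unit_root k j) h0)))"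
    by (simp add: cauchy_avg_def circle_integrand_def F.scale_diff_right sum_subtractf)
  also have "q \<dots> \<le> M"
  proof (rule complex_seminorm.average_le[OF F.seminorm[OF q]])
    fix j
    show "q (smF (cnj (unit_root k j) ^ n) (f (x + smE (unit_root k j) h) - f (x + smE (unit_root k j) h0))) \<le> M"
      using bound[of "unit_root k j"] complex_seminorm.homog[OF F.seminorm[OF q]] by (simp add: norm_power)
  qed simp
  finally show ?thesis .
qed

lemma taylor_term_le:
  assumes "h \<in> dir_ball" "q \<in> PF" "\<And>\<zeta>. norm \<zeta> = 1 \<Longrightarrow> q (f (x + smE \<zeta> h)) \<le> M"
  shows "q (taylor_term n h) \<le> M"
  unfolding taylor_term_eq_cauchy_limit[OF assms(1)]
  by (rule F.limitin_seminorm_le[OF cauchy_avg_limitin[OF assms(1)] assms(2) cauchy_avg_le[OF assms(2,3)]])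

lemma taylor_term_diff_le:
  assumes h: "h \<in> dir_ball" and h0: "h0 \<in> dir_ball" and q: "q \<in> PF"
    and "\<And>\<zeta>. norm \<zeta> = 1 \<Longrightarrow> q (f (x + smE \<zeta> h) - f (x + smE \<zeta> h0)) \<le> M"
  shows "q (taylor_term n h - taylor_term n h0) \<le> M"
  unfolding taylor_term_eq_cauchy_limit[OF h] taylor_term_eq_cauchy_limit[OF h0]
  by (rule F.limitin_seminorm_le[OF F.limitin_diff[OF cauchy_avg_limitin[OF h] cauchy_avg_limitin[OF h0]]
        q cauchy_avg_diff_le[OF q assms(4)]])

lemma circle_integrand_0 [simp]: "circle_integrand 0 \<zeta> h = f (x + smE \<zeta> h)"
  by (simp add: circle_integrand_def)

lemma bounded_on_circle:
  assumes h: "h \<in> dir_ball" and q: "q \<in> PF"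
  obtains M where "M \<ge> 0" "\<And>\<zeta>. norm \<zeta> = 1 \<Longrightarrow> q (f (x + smE \<zeta> h)) \<le> M"
proof -
  interpret q: complex_seminorm smF q
    using F.seminorm[OF q] .
  define \<phi> where "\<phi> = (\<lambda>\<zeta>. q (f (x + smE \<zeta> h)))"
  have "continuous_on (sphere 0 1) \<phi>"
    unfolding continuous_on_iff
  proof (intro ballI allI impI)
    fix \<zeta>0 :: complex and e :: real
    assume \<zeta>0: "\<zeta>0 \<in> sphere 0 1" and "e > 0"
    then obtain Q \<rho> \<delta> where T: "finite Q" "Q \<subseteq> PE" "\<rho> > 0" "\<delta> > 0"
      "\<And>\<zeta> \<zeta>' h'. norm \<zeta> = 1 \<Longrightarrow> norm \<zeta>' = 1 \<Longrightarrow> norm (\<zeta> - \<zeta>') < \<delta> \<Longrightarrow> h' \<in> dir_ball \<Longrightarrow>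
        h' \<in> seminorm_ball Q h \<rho> \<Longrightarrow> q (circle_integrand 0 \<zeta> h' - circle_integrand 0 \<zeta>' h) < e"
      using circle_integrand_uniformly_continuous[OF h q] by blast
    have "h \<in> seminorm_ball Q h \<rho>"
      by (rule E.centre_in_seminorm_ball[OF T(3,2)])
    then have "dist (\<phi> \<zeta>) (\<phi> \<zeta>0) < e" if "\<zeta> \<in> sphere 0 1" "dist \<zeta> \<zeta>0 < \<delta>" for \<zeta>
      using T(5)[of \<zeta> \<zeta>0 h] that \<zeta>0 h q.reverse_triangle[of "f (x + smE \<zeta> h)" "f (x + smE \<zeta>0 h)"]
      by (simp add: \<phi>_def dist_real_def dist_norm)
    with T(4) show "\<exists>\<delta>>0. \<forall>\<zeta>\<in>sphere 0 1. dist \<zeta> \<zeta>0 < \<delta> \<longrightarrow> dist (\<phi> \<zeta>) (\<phi> \<zeta>0) < e"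
      by blast
  qed
  then obtain z where "\<forall>\<zeta>\<in>sphere 0 1. \<phi> \<zeta> \<le> \<phi> z"
    using continuous_attains_sup[OF compact_sphere] by (metis norm_one mem_sphere_0 empty_iff)
  moreover have "\<phi> z \<ge> 0"
    unfolding \<phi>_def by (rule q.nonneg)
  ultimately show thesis
    by (intro that[of "\<phi> z"]) (auto simp: \<phi>_def)
qed

lemma taylor_term_continuous_near_0:
  assumes h0: "h0 \<in> seminorm_ball Q0 0 (r / 6)" and q: "q \<in> PF" and e: "e > 0"
  obtains Q \<rho> where "finite Q" "Q \<subseteq> PE" "\<rho> > 0"
    "\<And>h. h \<in> seminorm_ball Q h0 \<rho> \<Longrightarrow> q (taylor_term n h - taylor_term n h0) \<le> e"
proof -
  have "p (h0 - 0) < r / 3" if "p \<in> Q0" for p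
  proof -
    have "p (h0 - 0) < r / 6"
      using h0 that unfolding seminorm_ball_def by blast
    then show ?thesis
      using Q0(3) by linarith
  qed
  then have h0': "h0 \<in> dir_ball"
    by (simp add: seminorm_ball_def)
  obtain Q \<rho> \<delta> where T: "finite Q" "Q \<subseteq> PE" "\<rho> > 0" "\<delta> > 0"
    "\<And>\<zeta> \<zeta>' h. norm \<zeta> = 1 \<Longrightarrow> norm \<zeta>' = 1 \<Longrightarrow> norm (\<zeta> - \<zeta>') < \<delta> \<Longrightarrow> h \<in> dir_ball \<Longrightarrow>
      h \<in> seminorm_ball Q h0 \<rho> \<Longrightarrow> q (circle_integrand 0 \<zeta> h - circle_integrand 0 \<zeta>' h0) < e"
    using circle_integrand_uniformly_continuous[OF h0' q e] by blast
  show thesis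
  proof (rule that[of "Q \<union> Q0" "min \<rho> (r / 6)"])
    show "finite (Q \<union> Q0)" "Q \<union> Q0 \<subseteq> PE" "min \<rho> (r / 6) > 0"
      using T(1-3) Q0 by auto
    fix h
    assume h: "h \<in> seminorm_ball (Q \<union> Q0) h0 (min \<rho> (r / 6))"
    have "p (h - 0) < r / 3" if p: "p \<in> Q0" for p
    proof -
      have "p (h - h0) < r / 6" "p (h0 - 0) < r / 6"
        using h h0 p unfolding seminorm_ball_def by auto
      then show ?thesis
        using complex_seminorm.triangle_diff[OF E.seminorm, of p h 0 h0] p Q0(2) by auto
    qed
    then have hW: "h \<in> dir_ball"
      by (simp add: seminorm_ball_def)
    have "h \<in> seminorm_ball Q h0 \<rho>"
      using h by (simp add: seminorm_ball_def)
    then have "q (f (x + smE \<zeta> h) - f (x + smE \<zeta> h0)) \<le> e" if "norm \<zeta> = 1" for \<zeta>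
      using T(5)[of \<zeta> \<zeta> h] T(4) hW that by simp
    then show "q (taylor_term n h - taylor_term n h0) \<le> e"
      by (rule taylor_term_diff_le[OF hW h0' q])
  qed
qed

lemma continuous_taylor_term: "continuous_map (seminorm_topology PE) (seminorm_topology PF) (taylor_term n)"
proof (rule F.continuous_map_seminorm_topologyI[OF E.clcs_space_axioms])
  fix y0 q and e :: real
  assume q: "q \<in> PF" and e: "e > 0"
  interpret q: complex_seminorm smF q
    using F.seminorm[OF q] .
  obtain t where t: "t \<ge> 1" "smE (of_real (1 / t)) y0 \<in> seminorm_ball Q0 0 (r / 6)"
    using E.scale_into_seminorm_ball[OF Q0(1,2), of "r / 6"] Q0(3) by auto
  define h0 where "h0 = smE (of_real (1 / t)) y0"
  have "e / (2 * t ^ n) > 0"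
    using e t by simp
  then obtain Q \<rho> where T: "finite Q" "Q \<subseteq> PE" "\<rho> > 0"
    "\<And>h. h \<in> seminorm_ball Q h0 \<rho> \<Longrightarrow> q (taylor_term n h - taylor_term n h0) \<le> e / (2 * t ^ n)"
    using taylor_term_continuous_near_0[OF t(2)[folded h0_def] q] by blast
  show "\<exists>Q r. finite Q \<and> Q \<subseteq> PE \<and> r > 0 \<and> (\<forall>y\<in>seminorm_ball Q y0 r. q (taylor_term n y - taylor_term n y0) < e)"
  proof (intro exI[of _ Q] exI[of _ "t * \<rho>"] conjI ballI)
    fix y
    assume y: "y \<in> seminorm_ball Q y0 (t * \<rho>)"
    define h where "h = smE (of_real (1 / t)) y"
    have "p (h - h0) < \<rho>" if p: "p \<in> Q" for p
    proof -
      have "h - h0 = smE (of_real (1 / t)) (y - y0)"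
        by (simp add: h_def h0_def E.scale_diff_right)
      then have "p (h - h0) = p (y - y0) / t"
        using t(1) complex_seminorm.homog[OF E.seminorm, of p] p T(2) by (auto simp: norm_divide)
      moreover have "p (y - y0) < t * \<rho>"
        using y p unfolding seminorm_ball_def by blast
      ultimately show ?thesis
        using t(1) by (simp add: divide_less_eq mult.commute)
    qed
    then have close: "q (taylor_term n h - taylor_term n h0) \<le> e / (2 * t ^ n)"
      by (intro T(4)) (simp add: seminorm_ball_def)
    have "y = smE (of_real t) h" "y0 = smE (of_real t) h0"
      using t(1) by (simp_all add: h_def h0_def E.scale_mult[symmetric])
    then have "q (taylor_term n y - taylor_term n y0) = t ^ n * q (taylor_term n h - taylor_term n h0)"
      using t(1) by (simp add: taylor_term_scale F.scale_diff_right[symmetric] q.homog norm_power)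
    also have "\<dots> \<le> t ^ n * (e / (2 * t ^ n))"
      using close t(1) by (intro mult_left_mono) auto
    also have "\<dots> < e"
      using e t(1) by simp
    finally show "q (taylor_term n y - taylor_term n y0) < e" .
  qed (use T t(1) in auto)
qed

lemma taylor_term_geometric_le:
  assumes h2: "smE 2 h \<in> dir_ball" and q: "q \<in> PF"
  shows "\<exists>M\<ge>0. \<forall>n. q (taylor_term n h) \<le> M * (1/2) ^ n"
proof -
  interpret q: complex_seminorm smF q
    using F.seminorm[OF q] .
  obtain M where M: "M \<ge> 0" "\<And>\<zeta>. norm \<zeta> = 1 \<Longrightarrow> q (f (x + smE \<zeta> (smE 2 h))) \<le> M"
    using bounded_on_circle[OF h2 q] by blast
  have "q (taylor_term n h) \<le> M * (1/2) ^ n" for n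
  proof -
    have "h = smE (1/2) (smE 2 h)"
      by (simp flip: E.scale_mult)
    then have "taylor_term n h = smF ((1/2) ^ n) (taylor_term n (smE 2 h))"
      using taylor_term_scale[of n "1/2" "smE 2 h"] by simp
    then have "q (taylor_term n h) = (1/2) ^ n * q (taylor_term n (smE 2 h))"
      by (simp add: q.homog norm_power norm_divide)
    also have "\<dots> \<le> (1/2) ^ n * M"
      using taylor_term_le[OF h2 q M(2)] by (intro mult_left_mono) auto
    finally show ?thesis
      by (simp add: mult.commute)
  qed
  with M(1) show ?thesis
    by blast
qed

lemma taylor_series_limitin:
  assumes y: "y \<in> seminorm_ball Q0 x (r / 6)"
  shows "limitin (seminorm_topology PF) (\<lambda>N. \<Sum>n<N. taylor_term n (y - x)) (f y) sequentially"
proof -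
  define h where "h = y - x"
  have "p (smE 2 h - 0) < r / 3 \<and> p (h - 0) < r / 3" if p: "p \<in> Q0" for p
  proof -
    have "p (y - x) < r / 6"
      using y p unfolding seminorm_ball_def by blast
    moreover have "p (smE 2 h) = 2 * p h"
      using complex_seminorm.homog[OF E.seminorm, of p 2 h] p Q0(2) by auto
    ultimately show ?thesis
      using Q0(3) by (simp add: h_def)
  qed
  then have h2: "smE 2 h \<in> dir_ball" and hW: "h \<in> dir_ball"
    by (simp_all add: seminorm_ball_def)
  have "seminorm_Cauchy PF (\<lambda>N. \<Sum>n<N. taylor_term n h)"
    by (rule F.seminorm_Cauchy_partial_sums) (rule taylor_term_geometric_le[OF h2])
  then obtain s where s: "limitin (seminorm_topology PF) (\<lambda>N. \<Sum>n<N. taylor_term n h) s sequentially"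
    using Fcomplete unfolding seq_complete_lcs_def by blast
  have "s = f y"
  proof (rule functionals_eqI)
    fix l
    assume l: "l \<in> \<Lambda>"
    have "(\<lambda>n. c l n h * 1 ^ n) sums l (f (x + smE 1 h))"
      by (rule weak_series_on_line[OF l hW]) simp
    then have "(\<lambda>N. l (\<Sum>n<N. taylor_term n h)) \<longlonglongrightarrow> l (f y)"
      by (simp add: h_def sums_def functional_sum[OF l] functional_taylor_term[OF l])
    then show "l s = l (f y)"
      by (rule LIMSEQ_unique[OF functional_tendsto[OF s l]])
  qed
  then show ?thesis
    using s by (simp add: h_def)
qed

text \<open>Polarization recovers the symmetric \<open>n\<close>-linear form of each scalar polynomial \<open>c l n\<close> from its
  diagonal; the same alternating sum of values of \<open>taylor_term n\<close> is therefore an \<open>F\<close>-valued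
  \<open>n\<close>-linear map, because all of its images under \<open>\<Lambda>\<close> are.\<close>
definition polar_form :: "nat \<Rightarrow> (nat \<Rightarrow> 'a) \<Rightarrow> 'b" where
  "polar_form n v = smF (1 / of_nat (card (bij_maps n)))
     (\<Sum>S\<in>Pow {..<n}. smF ((-1) ^ (n - card S)) (taylor_term n (\<Sum>i\<in>S. v i)))"

lemma weak_coeff_multilinear:
  assumes "l \<in> \<Lambda>"
  obtains B where "cmultilinear smE times n B" "\<And>y. c l n y = B (\<lambda>_. y)"
  using expansion[OF assms] unfolding weak_expansion_def chom_poly_def by blast

lemma functional_polar_form:
  assumes l: "l \<in> \<Lambda>" and B: "cmultilinear smE times n B" "\<And>y. c l n y = B (\<lambda>_. y)"
  shows "l (polar_form n v) = (1 / of_nat (card (bij_maps n))) * symmetrize n B v"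
proof -
  have "l (polar_form n v) = (1 / of_nat (card (bij_maps n))) *
      (\<Sum>S\<in>Pow {..<n}. (-1) ^ (n - card S) * B (\<lambda>_. \<Sum>i\<in>S. v i))"
    unfolding polar_form_def
    by (simp add: functional_scale[OF l] functional_sum[OF l] functional_taylor_term[OF l] B(2))
  also have "(\<Sum>S\<in>Pow {..<n}. (-1) ^ (n - card S) * B (\<lambda>_. \<Sum>i\<in>S. v i)) = symmetrize n B v"
    by (rule polarization[OF B(1)])
  finally show ?thesis .
qed

lemma cmultilinear_polar_form: "cmultilinear smE smF n (polar_form n)"
  unfolding cmultilinear_def clinear_map_def
proof (intro conjI allI impI)
  fix v w :: "nat \<Rightarrow> 'a"
  assume vw: "\<forall>i<n. v i = w i"
  show "polar_form n v = polar_form n w"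
    unfolding polar_form_def
  proof (rule arg_cong[where f = "smF _"], rule sum.cong[OF refl])
    fix S
    assume "S \<in> Pow {..<n}"
    then have "(\<Sum>i\<in>S. v i) = (\<Sum>i\<in>S. w i)"
      using vw by (intro sum.cong) auto
    then show "smF ((-1) ^ (n - card S)) (taylor_term n (\<Sum>i\<in>S. v i)) =
        smF ((-1) ^ (n - card S)) (taylor_term n (\<Sum>i\<in>S. w i))"
      by simp
  qed
next
  fix i v y z
  assume i: "i < n"
  show "polar_form n (v(i := y + z)) = polar_form n (v(i := y)) + polar_form n (v(i := z))"
  proof (rule functionals_eqI)
    fix l
    assume l: "l \<in> \<Lambda>"
    obtain B where B: "cmultilinear smE times n B" "\<And>y. c l n y = B (\<lambda>_. y)"
      using weak_coeff_multilinear[OF l, of n] by blast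
    show "l (polar_form n (v(i := y + z))) = l (polar_form n (v(i := y)) + polar_form n (v(i := z)))"
      by (simp add: functional_add[OF l] functional_polar_form[OF l B] symmetrize_add[OF B(1) i]
          distrib_left)
  qed
next
  fix i v a y
  assume i: "i < n"
  show "polar_form n (v(i := smE a y)) = smF a (polar_form n (v(i := y)))"
  proof (rule functionals_eqI)
    fix l
    assume l: "l \<in> \<Lambda>"
    obtain B where B: "cmultilinear smE times n B" "\<And>y. c l n y = B (\<lambda>_. y)"
      using weak_coeff_multilinear[OF l, of n] by blast
    show "l (polar_form n (v(i := smE a y))) = l (smF a (polar_form n (v(i := y))))"
      by (simp add: functional_scale[OF l] functional_polar_form[OF l B] symmetrize_scale[OF B(1) i])
  qed
qed

lemma taylor_term_eq_polar_form: "taylor_term n y = polar_form n (\<lambda>_. y)"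
proof (rule functionals_eqI)
  fix l
  assume l: "l \<in> \<Lambda>"
  obtain B where B: "cmultilinear smE times n B" "\<And>y. c l n y = B (\<lambda>_. y)"
    using weak_coeff_multilinear[OF l, of n] by blast
  show "l (taylor_term n y) = l (polar_form n (\<lambda>_. y))"
    using card_bij_maps_pos[of n]
    by (simp add: functional_polar_form[OF l B] symmetrize_diag functional_taylor_term[OF l] B(2))
qed

lemma chom_poly_taylor_term: "chom_poly smE smF n (taylor_term n)"
  unfolding chom_poly_def using cmultilinear_polar_form taylor_term_eq_polar_form by blast

end

context weakly_analytic
begin

lemma taylor_expansion_at:
  assumes "x \<in> U"
  shows "\<exists>V pn. openin (seminorm_topology PE) V \<and> x \<in> V \<and> V \<subseteq> U \<and>
    (\<forall>n. chom_poly smE smF n (pn n) \<and> continuous_map (seminorm_topology PE) (seminorm_topology PF) (pn n)) \<and>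
    (\<forall>y\<in>V. limitin (seminorm_topology PF) (\<lambda>N. \<Sum>n<N. pn n (y - x)) (f y) sequentially)"
proof -
  obtain Q0 r where Q0: "finite Q0" "Q0 \<subseteq> PE" "r > 0" "seminorm_ball Q0 x r \<subseteq> U"
    using E.openin_imp_seminorm_ball[OF U, rule_format, OF assms] by blast
  obtain V c where "\<And>l. l \<in> \<Lambda> \<Longrightarrow> weak_expansion l x (V l) (c l)"
    using weak_expansions_at[OF assms] by blast
  with Q0 interpret weakly_analytic_at smE PE smF PF U f \<Lambda> x Q0 r V c
    by unfold_locales
  have "openin (seminorm_topology PE) (seminorm_ball Q0 x (r / 6))"
    using E.openin_seminorm_ball Q0 by simp
  moreover have "x \<in> seminorm_ball Q0 x (r / 6)"
    using E.centre_in_seminorm_ball Q0 by simp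
  moreover have "seminorm_ball Q0 x (r / 6) \<subseteq> U"
    using Q0 by (force simp: seminorm_ball_def)
  ultimately show ?thesis
    using chom_poly_taylor_term continuous_taylor_term taylor_series_limitin by blast
qed

end

theorem lemmaA3:
  fixes smE :: "complex \<Rightarrow> 'a::ab_group_add \<Rightarrow> 'a" and PE :: "('a \<Rightarrow> real) set"
    and smF :: "complex \<Rightarrow> 'b::ab_group_add \<Rightarrow> 'b" and PF :: "('b \<Rightarrow> real) set"
    and U :: "'a set" and f :: "'a \<Rightarrow> 'b" and \<Lambda> :: "('b \<Rightarrow> complex) set"
  assumes E: "clcs smE PE"
    and F: "clcs smF PF" and Fcomplete: "seq_complete_lcs PF"
    and U: "openin (seminorm_topology PE) U"
    and \<Lambda>_lin: "\<forall>l\<in>\<Lambda>. clinear_map smF times l \<and>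
                   continuous_map (seminorm_topology PF) euclidean l"
    and \<Lambda>_sep: "\<forall>x. x \<noteq> 0 \<longrightarrow> (\<exists>l\<in>\<Lambda>. l x \<noteq> 0)"
    and f_cont: "continuous_map (subtopology (seminorm_topology PE) U) (seminorm_topology PF) f"
    and weak: "\<forall>l\<in>\<Lambda>. canalytic smE PE times complex_seminorms U (l \<circ> f)"
  shows "canalytic smE PE smF PF U f"
proof -
  interpret weakly_analytic smE PE smF PF U f \<Lambda>
    using assms by unfold_locales
  show ?thesis
    unfolding canalytic_def using f_cont taylor_expansion_at by blast
qed

end
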